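(* Let $n\ge1$, and let $\mathfrak{gl}(n)_\alpha=\{A_1,\dots,A_d\}$ and $\mathfrak{gl}(n)_\beta=\{E_{i_1j_1},\dots,E_{i_ej_e}\}$ be subsets of the standard basis $\{E_{ij}:1\le i,j\le n\}$ of $\mathfrak{gl}(n)$. Let $\mathcal G_{\rm drift}$ be the directed graph on $\mathrm V=\{1,\dots,n\}$ with an arc $(i,j)$ iff $[A_s]_{ij}\neq0$ for some $s$, and $\mathcal G_{\rm contr}$ the directed graph on $\mathrm V$ with arc set $\{(i_1,j_1),\dots,(i_e,j_e)\}$ (arcs $(i,i)$ are self-loops). If each weakly connected component of $\mathcal G_{\rm contr}$ is strongly connected with at least two nodes, and the union digraph $\mathcal G_{\rm drift}\cup\mathcal G_{\rm contr}$ is strongly connected with at least one self-loop, then the system $\dot X=\mathsf B_0X+(\sum_{i=1}^m u_i\mathsf B_i)X$ is structurally accessible on $\mathrm{GL}^+(n)$ with respect to the pair of zero patterns $\big(\Sigma_{\rm r}(\mathfrak{gl}(n)_\alpha),\Sigma_{\rm f}(\mathfrak{gl}(n)_\beta)\big)$.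
   Context: $E_{ij}$ is the $n\times n$ matrix with $(i,j)$ entry $1$ and others $0$; $\mathrm{GL}^+(n)$ is the identity component of the real general linear group, with Lie algebra $\mathfrak{gl}(n)$. For a finite subset $\{g_s\}$ of a real Lie algebra, $\Sigma_{\rm f}(\{g_s\})=\{\sum l_sg_s:l_s\in\mathbb R\}$, $\Sigma_{\rm r}(\{g_s\})=\{\sum l_sg_s:l_s\in\mathbb R,l_s\ne0\ \forall s\}$. For $\dot X=\mathsf B_0X+(\sum_{i=1}^m u_i\mathsf B_i)X$ on a connected matrix Lie group $\mathbf G$ (piecewise continuous real controls), $\mathcal R(I)$ is the set of states reachable at some time $T\ge0$ from $X(0)=I$; the system is accessible if $\mathcal R(I)$ has an interior point in $\mathbf G$. Structural accessibility w.r.t. $(\Sigma_{\rm r}(\mathfrak g_\alpha),\Sigma_{\rm f}(\mathfrak g_\beta))$: there exist $m\ge1$, $\mathsf B_0\in\Sigma_{\rm r}(\mathfrak g_\alpha)$, $\mathsf B_1,\dots,\mathsf B_m\in\Sigma_{\rm f}(\mathfrak g_\beta)$ making the system accessible. Weakly connected component: component ignoring arc directions; strongly connected: all nodes mutually reachable by directed paths. *)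

theory Defs
  imports "HOL-Analysis.Analysis"
begin

text \<open>n x n real matrices, with the index type 'n (of cardinality n) playing the role of {1..n}.\<close>
type_synonym 'n mat = "real ^ 'n ^ 'n"

definition Emat :: "'n::finite \<Rightarrow> 'n \<Rightarrow> 'n mat" where
  "Emat i j = (\<chi> k l. if k = i \<and> l = j then 1 else 0)"

definition GLp :: "('n::finite) mat set" where
  "GLp = {X. det X > 0}"

definition Sigma_f :: "'a::real_vector set \<Rightarrow> 'a set" where
  "Sigma_f S = {(\<Sum>g\<in>S. l g *\<^sub>R g) | l. True}"

definition Sigma_r :: "'a::real_vector set \<Rightarrow> 'a set" where
  "Sigma_r S = {(\<Sum>g\<in>S. l g *\<^sub>R g) | l. \<forall>g\<in>S. l g \<noteq> 0}"

definition piecewise_cont_on :: "real \<Rightarrow> real \<Rightarrow> (real \<Rightarrow> real) \<Rightarrow> bool" where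
  "piecewise_cont_on a b f \<longleftrightarrow>
     (\<exists>D. finite D \<and>
        (\<forall>t\<in>{a..b} - D. continuous (at t within {a..b}) f) \<and>
        (\<forall>t\<in>{a<..b}. \<exists>L. (f \<longlongrightarrow> L) (at_left t)) \<and>
        (\<forall>t\<in>{a..<b}. \<exists>L. (f \<longlongrightarrow> L) (at_right t)))"

definition is_trajectory ::
  "'n::finite mat \<Rightarrow> nat \<Rightarrow> (nat \<Rightarrow> 'n mat) \<Rightarrow> (nat \<Rightarrow> real \<Rightarrow> real) \<Rightarrow> real \<Rightarrow> (real \<Rightarrow> 'n mat) \<Rightarrow> bool" where
  "is_trajectory B0 m B u T X \<longleftrightarrow>
     T \<ge> 0 \<and> (\<forall>i\<in>{1..m}. piecewise_cont_on 0 T (u i)) \<and>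
     X 0 = mat 1 \<and> continuous_on {0..T} X \<and>
     (\<exists>D. finite D \<and> (\<forall>t\<in>{0..T} - D.
        (X has_vector_derivative ((B0 + (\<Sum>i\<in>{1..m}. u i t *\<^sub>R B i)) ** X t)) (at t within {0..T})))"

definition reachable_set :: "'n::finite mat \<Rightarrow> nat \<Rightarrow> (nat \<Rightarrow> 'n mat) \<Rightarrow> 'n mat set" where
  "reachable_set B0 m B = {X T | T u X. is_trajectory B0 m B u T X}"

definition accessible :: "'n::finite mat \<Rightarrow> nat \<Rightarrow> (nat \<Rightarrow> 'n mat) \<Rightarrow> bool" where
  "accessible B0 m B \<longleftrightarrow>
     (\<exists>U. openin (top_of_set GLp) U \<and> U \<noteq> {} \<and> U \<subseteq> reachable_set B0 m B)"

definition structurally_accessible :: "'n::finite mat set \<Rightarrow> 'n mat set \<Rightarrow> bool" where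
  "structurally_accessible Ga Gb \<longleftrightarrow>
     (\<exists>m B0 B. m \<ge> 1 \<and> B0 \<in> Sigma_r Ga \<and> (\<forall>i\<in>{1..m}. B i \<in> Sigma_f Gb) \<and>
        accessible B0 m B)"

definition drift_arcs :: "'n::finite mat set \<Rightarrow> ('n \<times> 'n) set" where
  "drift_arcs As = {(i, j). \<exists>A\<in>As. A $ i $ j \<noteq> 0}"

definition weak_component :: "('n \<times> 'n) set \<Rightarrow> 'n \<Rightarrow> 'n set" where
  "weak_component Arcs v = {w. (v, w) \<in> (Arcs \<union> Arcs\<inverse>)\<^sup>*}"

definition strongly_connected_set :: "('n \<times> 'n) set \<Rightarrow> 'n set \<Rightarrow> bool" where
  "strongly_connected_set Arcs S \<longleftrightarrow> (\<forall>v\<in>S. \<forall>w\<in>S. (v, w) \<in> (Arcs \<inter> (S \<times> S))\<^sup>*)"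

end

theory Submission
  imports Defs
begin

text \<open>Constant controls give the trajectories \<open>t \<mapsto> exp(t A) X\<close> with \<open>A = B\<^sub>0 + \<Sum> v\<^sub>i B\<^sub>i\<close>,
  so finite products of such exponentials with positive durations are reachable. Among these
  products choose one whose derivatives in the durations span a space of maximal dimension; that
  span is then invariant under \<open>ad A\<close> for all admissible \<open>A\<close>, hence equal to \<open>gl(n)\<close> under the Lie
  algebra rank condition, and the open mapping theorem makes the product an interior point of the
  reachable set inside \<open>GL\<^sup>+(n)\<close>.

  For the rank condition take \<open>B\<^sub>0\<close> with unit weights on the drift pattern (and weight 3 on one
  self-loop) and the \<open>B\<^sub>i\<close> the basis matrices of the contraction pattern. Brackets of the latter give
  \<open>sl\<close> of each strongly connected contraction component; bracketing \<open>B\<^sub>0\<close> with these and separating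
  root vectors by diagonal elements propagates full blocks between components along the strongly
  connected union graph, and the self-loop yields an element of nonzero trace.\<close>

lemma matrix_add_rdistrib: "((A::real^'m::finite^'n::finite) + B) ** (C::real^'p::finite^'m) = A ** C + B ** C"
  by (simp add: matrix_matrix_mult_def vec_eq_iff sum.distrib distrib_right)

lemma matrix_diff_ldistrib: "(A::real^'m::finite^'n::finite) ** ((B::real^'p::finite^'m) - C) = A ** B - A ** C"
  by (simp add: matrix_matrix_mult_def vec_eq_iff sum_subtractf right_diff_distrib)

lemma matrix_diff_rdistrib: "((A::real^'m::finite^'n::finite) - B) ** (C::real^'p::finite^'m) = A ** C - B ** C"
  by (simp add: matrix_matrix_mult_def vec_eq_iff sum_subtractf left_diff_distrib)

lemma matrix_mul_lneg: "(- (A::real^'m::finite^'n::finite)) ** (X::real^'p::finite^'m) = - (A ** X)"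
  by (simp add: matrix_matrix_mult_def vec_eq_iff sum_negf)

lemma bounded_bilinear_matrix_mult:
  "bounded_bilinear ((**) :: real^'n::finite^'n \<Rightarrow> real^'n^'n \<Rightarrow> real^'n^'n)"
proof -
  have "bilinear ((**) :: real^'n^'n \<Rightarrow> real^'n^'n \<Rightarrow> real^'n^'n)"
    unfolding bilinear_def
    by (auto intro!: linearI simp: matrix_add_ldistrib matrix_add_rdistrib matrix_scalar_ac scalar_matrix_assoc)
  then show ?thesis using bilinear_conv_bounded_bilinear by blast
qed

lemma bounded_linear_matrix_mult_right: "bounded_linear (\<lambda>Z::real^'n::finite^'n. Z ** (C::real^'n^'n))"
  using bounded_bilinear.bounded_linear_left[OF bounded_bilinear_matrix_mult] .

lemma linear_matrix_sandwich: "linear (\<lambda>X::real^'n::finite^'n. (P::real^'n^'n) ** X ** (Q::real^'n^'n))"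
  by (rule linearI) (simp_all add: matrix_add_ldistrib matrix_add_rdistrib matrix_scalar_ac scalar_matrix_assoc)

lemma bounded_linear_matrix_sandwich:
  "bounded_linear (\<lambda>X::real^'n::finite^'n. (P::real^'n^'n) ** X ** (Q::real^'n^'n))"
  using linear_matrix_sandwich linear_conv_bounded_linear by blast

lemma inj_matrix_sandwich:
  fixes P Q P' Q' :: "real^'n::finite^'n"
  assumes "P' ** P = mat 1" "Q ** Q' = mat 1"
  shows "inj (\<lambda>X. P ** X ** Q)"
proof (rule injI)
  fix X Y assume "P ** X ** Q = P ** Y ** Q"
  then have "(P' ** P) ** X ** (Q ** Q') = (P' ** P) ** Y ** (Q ** Q')"
    by (metis matrix_mul_assoc)
  then show "X = Y" using assms by simp
qed

section \<open>Matrix exponential\<close>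

text \<open>Matrices carry no Banach algebra structure in the library, but bounded endomorphisms do:
  the matrix exponential is the exponential of that algebra, transported along the matrix
  representation.\<close>

typedef (overloaded) 'a endo = "UNIV :: ('a::real_normed_vector \<Rightarrow>\<^sub>L 'a) set"
  morphisms blinfun_of_endo endo_of_blinfun
  by auto

setup_lifting type_definition_endo

instantiation endo :: (real_normed_vector) real_normed_vector
begin
lift_definition norm_endo :: "'a endo \<Rightarrow> real" is norm .
lift_definition minus_endo :: "'a endo \<Rightarrow> 'a endo \<Rightarrow> 'a endo" is "(-)" .
lift_definition plus_endo :: "'a endo \<Rightarrow> 'a endo \<Rightarrow> 'a endo" is "(+)" .
lift_definition uminus_endo :: "'a endo \<Rightarrow> 'a endo" is "uminus" .
lift_definition zero_endo :: "'a endo" is "0" .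
lift_definition scaleR_endo :: "real \<Rightarrow> 'a endo \<Rightarrow> 'a endo" is "scaleR" .
definition dist_endo :: "'a endo \<Rightarrow> 'a endo \<Rightarrow> real"
  where "dist_endo a b = norm (a - b)"
definition uniformity_endo :: "('a endo \<times> 'a endo) filter"
  where "uniformity_endo = (INF e\<in>{0 <..}. principal {(x, y). dist x y < e})"
definition open_endo :: "'a endo set \<Rightarrow> bool"
  where "open_endo S = (\<forall>x\<in>S. \<forall>\<^sub>F (x', y) in uniformity. x' = x \<longrightarrow> y \<in> S)"
definition sgn_endo :: "'a endo \<Rightarrow> 'a endo"
  where "sgn_endo x = scaleR (inverse (norm x)) x"
instance
  apply standard
  unfolding dist_endo_def open_endo_def sgn_endo_def uniformity_endo_def
  apply (rule refl | (transfer, force simp: norm_triangle_ineq algebra_simps))+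
  done
end

instantiation endo :: ("{real_normed_vector,perfect_space}") real_normed_algebra_1
begin
lift_definition times_endo :: "'a endo \<Rightarrow> 'a endo \<Rightarrow> 'a endo" is "blinfun_compose" .
lift_definition one_endo :: "'a endo" is "id_blinfun" .
instance
proof
  fix a b c :: "'a endo" and r :: real
  show "a * b * c = a * (b * c)" by transfer (rule blinfun_eqI, simp)
  show "(a + b) * c = a * c + b * c" by transfer (rule blinfun_eqI, simp add: blinfun.bilinear_simps)
  show "a * (b + c) = a * b + a * c" by transfer (rule blinfun_eqI, simp add: blinfun.bilinear_simps)
  show "r *\<^sub>R a * b = r *\<^sub>R (a * b)" by transfer (rule blinfun_eqI, simp add: blinfun.bilinear_simps)
  show "a * r *\<^sub>R b = r *\<^sub>R (a * b)" by transfer (rule blinfun_eqI, simp add: blinfun.bilinear_simps)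
  show "1 * a = a" by transfer (rule blinfun_eqI, simp)
  show "a * 1 = a" by transfer (rule blinfun_eqI, simp)
  show "(0::'a endo) \<noteq> 1" by transfer (metis norm_blinfun_id norm_zero zero_neq_one)
  show "norm (a * b) \<le> norm a * norm b" by transfer (rule norm_blinfun_compose)
  show "norm (1::'a endo) = 1" by transfer simp
qed
end

instance endo :: ("{banach,perfect_space}") banach
proof
  fix X :: "nat \<Rightarrow> 'a endo"
  assume "Cauchy X"
  have dist_rep: "dist (blinfun_of_endo a) (blinfun_of_endo b) = dist a b" for a b :: "'a endo"
    unfolding dist_endo_def dist_norm by transfer simp
  have "Cauchy (\<lambda>n. blinfun_of_endo (X n))"
    using \<open>Cauchy X\<close> unfolding Cauchy_def dist_rep .
  then obtain L where "(\<lambda>n. blinfun_of_endo (X n)) \<longlonglongrightarrow> L"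
    using Cauchy_convergent_iff convergent_def by blast
  then have "X \<longlonglongrightarrow> endo_of_blinfun L"
    unfolding tendsto_iff dist_rep[symmetric] by (simp add: endo_of_blinfun_inverse)
  then show "convergent X" unfolding convergent_def by blast
qed

definition endo_of_matrix :: "real^'n^'n \<Rightarrow> (real^'n) endo" where
  "endo_of_matrix A = endo_of_blinfun (Blinfun (\<lambda>x. A *v x))"

definition matrix_of_endo :: "(real^'n) endo \<Rightarrow> real^'n^'n" where
  "matrix_of_endo f = matrix (blinfun_apply (blinfun_of_endo f))"

lemma blinfun_apply_endo_of_matrix: "blinfun_apply (blinfun_of_endo (endo_of_matrix A)) = (\<lambda>x. A *v x)"
  unfolding endo_of_matrix_def by (simp add: endo_of_blinfun_inverse bounded_linear_Blinfun_apply)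

lemma linear_blinfun_of_endo: "linear (blinfun_apply (blinfun_of_endo (f :: (real^'n::finite) endo)))"
  by (rule bounded_linear.linear[OF blinfun.bounded_linear_right])

lemma matrix_of_endo_inverse [simp]: "matrix_of_endo (endo_of_matrix A) = A"
  unfolding matrix_of_endo_def blinfun_apply_endo_of_matrix by (rule matrix_of_matrix_vector_mul)

lemma endo_of_matrix_inverse [simp]: "endo_of_matrix (matrix_of_endo f) = f"
proof -
  have "blinfun_apply (blinfun_of_endo (endo_of_matrix (matrix_of_endo f))) = blinfun_apply (blinfun_of_endo f)"
    unfolding blinfun_apply_endo_of_matrix matrix_of_endo_def
    using matrix_works linear_blinfun_of_endo linear_matrix_vector_mul_eq by fastforce
  then show ?thesis by (metis blinfun_apply_inject blinfun_of_endo_inject)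
qed

lemma matrix_of_endo_mult: "matrix_of_endo (f * g) = matrix_of_endo f ** matrix_of_endo g"
proof -
  have "blinfun_apply (blinfun_of_endo (f * g)) = blinfun_apply (blinfun_of_endo f) \<circ> blinfun_apply (blinfun_of_endo g)"
    by (simp add: times_endo.rep_eq fun_eq_iff)
  then show ?thesis unfolding matrix_of_endo_def
    by (simp add: matrix_compose[OF linear_blinfun_of_endo linear_blinfun_of_endo])
qed

lemma matrix_of_endo_one [simp]: "matrix_of_endo 1 = mat 1"
  unfolding matrix_of_endo_def using matrix_id_mat_1 by (simp add: one_endo.rep_eq id_def)

lemma matrix_of_endo_add: "matrix_of_endo (f + g) = matrix_of_endo f + matrix_of_endo g"
  unfolding matrix_of_endo_def by (simp add: plus_endo.rep_eq matrix_def vec_eq_iff blinfun.add_left)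

lemma matrix_of_endo_scaleR: "matrix_of_endo (r *\<^sub>R f) = r *\<^sub>R matrix_of_endo f"
  unfolding matrix_of_endo_def by (simp add: scaleR_endo.rep_eq matrix_def vec_eq_iff blinfun.scaleR_left)

lemma endo_of_matrix_scaleR: "endo_of_matrix (r *\<^sub>R A) = r *\<^sub>R endo_of_matrix A"
  by (metis matrix_of_endo_scaleR matrix_of_endo_inverse endo_of_matrix_inverse)

lemma bounded_linear_matrix_of_endo: "bounded_linear (matrix_of_endo :: (real^'n::finite) endo \<Rightarrow> _)"
proof (rule bounded_linear_intro[where K="real CARD('n) * real CARD('n)"])
  show "matrix_of_endo (x + y) = matrix_of_endo x + matrix_of_endo y" for x y :: "(real^'n) endo"
    by (rule matrix_of_endo_add)
  show "matrix_of_endo (r *\<^sub>R x) = r *\<^sub>R matrix_of_endo x" for r and x :: "(real^'n) endo"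
    by (rule matrix_of_endo_scaleR)
  fix f :: "(real^'n) endo"
  have entry_le: "\<bar>matrix_of_endo f $ i $ j\<bar> \<le> norm f" for i j
  proof -
    have "\<bar>matrix_of_endo f $ i $ j\<bar> = \<bar>blinfun_apply (blinfun_of_endo f) (axis j 1) $ i\<bar>"
      unfolding matrix_of_endo_def matrix_def by simp
    also have "\<dots> \<le> norm (blinfun_apply (blinfun_of_endo f) (axis j 1))" by (rule component_le_norm_cart)
    also have "\<dots> \<le> norm (blinfun_of_endo f) * norm (axis j (1::real))" by (rule norm_blinfun)
    also have "\<dots> = norm f" by (simp add: norm_endo.rep_eq)
    finally show ?thesis .
  qed
  have "norm (matrix_of_endo f) \<le> (\<Sum>i\<in>UNIV. norm (matrix_of_endo f $ i))"
    unfolding norm_vec_def by (rule L2_set_le_sum) simp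
  also have "\<dots> \<le> (\<Sum>i\<in>UNIV. \<Sum>j\<in>UNIV. \<bar>matrix_of_endo f $ i $ j\<bar>)"
    by (intro sum_mono norm_le_l1_cart)
  also have "\<dots> \<le> (\<Sum>i\<in>(UNIV::'n set). \<Sum>j\<in>(UNIV::'n set). norm f)"
    by (intro sum_mono entry_le)
  also have "\<dots> = norm f * (real CARD('n) * real CARD('n))" by simp
  finally show "norm (matrix_of_endo f) \<le> norm f * (real CARD('n) * real CARD('n))" .
qed

definition mat_exp :: "real^'n^'n \<Rightarrow> real^'n::finite^'n" where
  "mat_exp A = matrix_of_endo (exp (endo_of_matrix A))"

lemma mat_exp_zero [simp]: "mat_exp (0::real^'n::finite^'n) = mat 1"
proof -
  have "endo_of_matrix (0::real^'n^'n) = 0"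
    using endo_of_matrix_scaleR[of 0 "0::real^'n^'n"] by simp
  then show ?thesis by (simp add: mat_exp_def)
qed

lemma mat_exp_add: "mat_exp (s *\<^sub>R A) ** mat_exp (t *\<^sub>R A) = mat_exp ((s + t) *\<^sub>R A)"
  unfolding mat_exp_def matrix_of_endo_mult[symmetric] endo_of_matrix_scaleR
  by (simp add: exp_add_commuting[symmetric] scaleR_add_left)

lemma mat_exp_commute: "A ** mat_exp (t *\<^sub>R A) = mat_exp (t *\<^sub>R A) ** A"
proof -
  have "endo_of_matrix A * exp (t *\<^sub>R endo_of_matrix A) = exp (t *\<^sub>R endo_of_matrix A) * endo_of_matrix A"
    by (simp add: exp_times_scaleR_commute)
  then show ?thesis unfolding mat_exp_def endo_of_matrix_scaleR
    by (metis matrix_of_endo_mult matrix_of_endo_inverse)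
qed

lemma mat_exp_has_vector_derivative:
  "((\<lambda>t. mat_exp (t *\<^sub>R A)) has_vector_derivative (A ** mat_exp (t *\<^sub>R A))) (at t within S)"
proof -
  have "((\<lambda>t. exp (t *\<^sub>R endo_of_matrix A)) has_vector_derivative
      endo_of_matrix A * exp (t *\<^sub>R endo_of_matrix A)) (at t within S)"
    using exp_scaleR_has_vector_derivative_left has_vector_derivative_at_within by blast
  from bounded_linear.has_vector_derivative[OF bounded_linear_matrix_of_endo this]
  show ?thesis unfolding mat_exp_def endo_of_matrix_scaleR matrix_of_endo_mult by simp
qed

lemma continuous_on_mat_exp: "continuous_on S (\<lambda>t. mat_exp (t *\<^sub>R A))"
  unfolding continuous_on_eq_continuous_within
  using has_vector_derivative_continuous[OF mat_exp_has_vector_derivative] by blast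

lemma mat_exp_minus_right: "mat_exp (s *\<^sub>R A) ** mat_exp ((- s) *\<^sub>R A) = mat 1"
  by (simp only: mat_exp_add) simp

lemma mat_exp_minus_left: "mat_exp ((- s) *\<^sub>R A) ** mat_exp (s *\<^sub>R A) = mat 1"
  by (simp only: mat_exp_add) simp

lemma det_mat_exp_pos: "det (mat_exp (t *\<^sub>R A)) > 0"
proof -
  have "det (mat_exp ((t/2) *\<^sub>R A)) * det (mat_exp ((- (t/2)) *\<^sub>R A)) = 1"
    using mat_exp_minus_right[of "t/2" A] by (metis det_I det_mul)
  then have "det (mat_exp ((t/2) *\<^sub>R A)) \<noteq> 0" by auto
  moreover have "det (mat_exp (t *\<^sub>R A)) = det (mat_exp ((t/2) *\<^sub>R A)) ^ 2"
    using mat_exp_add[of "t/2" A "t/2"] by (metis det_mul field_sum_of_halves power2_eq_square)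
  ultimately show ?thesis by simp
qed

section \<open>Trajectories under piecewise constant controls\<close>

lemma mat_exp_shift_has_vector_derivative:
  fixes A C :: "real^'n::finite^'n"
  shows "((\<lambda>t. mat_exp ((t - T) *\<^sub>R A) ** C) has_vector_derivative (A ** mat_exp ((t - T) *\<^sub>R A) ** C)) (at t)"
proof -
  have shift: "mat_exp ((t - T) *\<^sub>R A) = mat_exp (t *\<^sub>R A) ** mat_exp ((- T) *\<^sub>R A)" for t
    using mat_exp_add[of t A "- T"] by simp
  have "((\<lambda>t. mat_exp (t *\<^sub>R A) ** (mat_exp ((- T) *\<^sub>R A) ** C)) has_vector_derivative
      (A ** mat_exp (t *\<^sub>R A)) ** (mat_exp ((- T) *\<^sub>R A) ** C)) (at t)"
    using bounded_linear.has_vector_derivative[OF bounded_linear_matrix_mult_right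
        mat_exp_has_vector_derivative[of A t UNIV]] by simp
  then show ?thesis unfolding shift by (simp add: matrix_mul_assoc)
qed

lemma at_within_Icc_shrink:
  fixes t T T' :: real
  assumes "t < T" "T \<le> T'"
  shows "at t within {0..T'} = at t within {0..T}"
  by (rule at_within_nhd[of t "{..<T}"]) (use assms in auto)

lemma one_sided_limits_extend_constant:
  fixes f :: "real \<Rightarrow> 'a::topological_space"
  assumes left: "\<forall>t\<in>{0<..T}. \<exists>L. (f \<longlongrightarrow> L) (at_left t)"
    and right: "\<forall>t\<in>{0..<T}. \<exists>L. (f \<longlongrightarrow> L) (at_right t)"
  shows "\<forall>t\<in>{0<..T'}. \<exists>L. ((\<lambda>t. if t \<le> T then f t else c) \<longlongrightarrow> L) (at_left t)"
    and "\<forall>t\<in>{0..<T'}. \<exists>L. ((\<lambda>t. if t \<le> T then f t else c) \<longlongrightarrow> L) (at_right t)"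
proof -
  let ?g = "\<lambda>t. if t \<le> T then f t else c"
  show "\<forall>t\<in>{0<..T'}. \<exists>L. (?g \<longlongrightarrow> L) (at_left t)"
  proof
    fix t assume t: "t \<in> {0<..T'}"
    show "\<exists>L. (?g \<longlongrightarrow> L) (at_left t)"
    proof (cases "t \<le> T")
      case True
      then obtain L where "(f \<longlongrightarrow> L) (at_left t)" using left t by fastforce
      moreover have ev: "\<forall>\<^sub>F x in at_left t. f x = ?g x"
        by (rule eventually_mono[OF eventually_at_left_real[of "t - 1" t]]) (use True in auto)
      ultimately show ?thesis unfolding tendsto_cong[OF ev] by blast
    next
      case False
      have "\<forall>\<^sub>F x in at_left t. ?g x = c"
        by (rule eventually_mono[OF eventually_at_left_real[of T t]]) (use False in auto)
      then show ?thesis by (intro exI[of _ c]) (rule tendsto_eventually)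
    qed
  qed
  show "\<forall>t\<in>{0..<T'}. \<exists>L. (?g \<longlongrightarrow> L) (at_right t)"
  proof
    fix t assume t: "t \<in> {0..<T'}"
    show "\<exists>L. (?g \<longlongrightarrow> L) (at_right t)"
    proof (cases "t < T")
      case True
      then obtain L where "(f \<longlongrightarrow> L) (at_right t)" using right t by fastforce
      moreover have ev: "\<forall>\<^sub>F x in at_right t. f x = ?g x"
        by (rule eventually_mono[OF eventually_at_right_real[of t T]]) (use True in auto)
      ultimately show ?thesis unfolding tendsto_cong[OF ev] by blast
    next
      case False
      have "\<forall>\<^sub>F x in at_right t. ?g x = c"
        by (rule eventually_mono[OF eventually_at_right_real[of t "t + 1"]]) (use False in auto)
      then show ?thesis by (intro exI[of _ c]) (rule tendsto_eventually)
    qed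
  qed
qed

lemma piecewise_cont_on_extend:
  assumes pc: "piecewise_cont_on 0 T f" and "0 < \<tau>"
  shows "piecewise_cont_on 0 (T + \<tau>) (\<lambda>t. if t \<le> T then f t else c)"
proof -
  let ?g = "\<lambda>t. if t \<le> T then f t else c"
  obtain D where "finite D" and cont: "\<forall>t\<in>{0..T} - D. continuous (at t within {0..T}) f"
    and left: "\<forall>t\<in>{0<..T}. \<exists>L. (f \<longlongrightarrow> L) (at_left t)"
    and right: "\<forall>t\<in>{0..<T}. \<exists>L. (f \<longlongrightarrow> L) (at_right t)"
    using pc unfolding piecewise_cont_on_def by blast
  have "continuous (at t within {0..T + \<tau>}) ?g" if t: "t \<in> {0..T + \<tau>} - insert T D" for t
  proof (cases "t < T")
    case True
    have "continuous (at t within {0..T}) ?g"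
      by (rule continuous_transform_within[where \<delta>=1, OF cont[rule_format]]) (use True t in auto)
    then show ?thesis using at_within_Icc_shrink[OF True, of "T + \<tau>"] \<open>0 < \<tau>\<close> by simp
  next
    case False
    then have "T < t" using t by auto
    have "continuous_on {T<..} ?g"
      using continuous_on_const[of "{T<..}" c]
      by (rule continuous_on_cong[THEN iffD1, rotated 2]) auto
    then have "isCont ?g t"
      using \<open>T < t\<close> continuous_on_eq_continuous_at[of "{T<..}" ?g] by auto
    then show ?thesis by (rule continuous_at_imp_continuous_within)
  qed
  then show ?thesis
    unfolding piecewise_cont_on_def using \<open>finite D\<close> one_sided_limits_extend_constant[OF left right]
    by (intro exI[of _ "insert T D"]) blast
qed

lemma mat_1_in_reachable_set: "mat 1 \<in> reachable_set B0 m B"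
proof -
  have "is_trajectory B0 m B (\<lambda>_ _. 0) 0 (\<lambda>_. mat 1)"
    unfolding is_trajectory_def piecewise_cont_on_def by (auto intro: exI[of _ "{0}"])
  then show ?thesis unfolding reachable_set_def by force
qed

lemma is_trajectory_append_constant:
  assumes traj: "is_trajectory B0 m B u T X" and "0 < \<tau>"
    and A: "A = B0 + (\<Sum>i\<in>{1..m}. v i *\<^sub>R B i)"
  shows "is_trajectory B0 m B (\<lambda>i t. if t \<le> T then u i t else v i) (T + \<tau>)
           (\<lambda>t. if t \<le> T then X t else mat_exp ((t - T) *\<^sub>R A) ** X T)"
    (is "is_trajectory B0 m B ?u _ ?X")
proof -
  obtain D where "0 \<le> T" and pc: "\<forall>i\<in>{1..m}. piecewise_cont_on 0 T (u i)"
    and "X 0 = mat 1" and cont: "continuous_on {0..T} X" and "finite D"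
    and deriv: "\<forall>t\<in>{0..T} - D. (X has_vector_derivative ((B0 + (\<Sum>i\<in>{1..m}. u i t *\<^sub>R B i)) ** X t))
                                  (at t within {0..T})"
    using traj unfolding is_trajectory_def by blast
  have cont_X: "continuous_on {0..T + \<tau>} ?X"
  proof (rule continuous_on_cases_le[where h="\<lambda>t. t"])
    show "continuous_on {t \<in> {0..T + \<tau>}. t \<le> T} X"
      by (rule continuous_on_subset[OF cont]) auto
    show "continuous_on {t \<in> {0..T + \<tau>}. T \<le> t} (\<lambda>t. mat_exp ((t - T) *\<^sub>R A) ** X T)"
      by (intro continuous_at_imp_continuous_on ballI
          has_vector_derivative_continuous[OF mat_exp_shift_has_vector_derivative])
  qed (auto intro: continuous_intros)
  have pc_u: "\<forall>i\<in>{1..m}. piecewise_cont_on 0 (T + \<tau>) (?u i)"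
    using pc piecewise_cont_on_extend \<open>0 < \<tau>\<close> by blast
  have deriv_X: "(?X has_vector_derivative ((B0 + (\<Sum>i\<in>{1..m}. ?u i t *\<^sub>R B i)) ** ?X t))
      (at t within {0..T + \<tau>})" if t: "t \<in> {0..T + \<tau>} - insert T D" for t
  proof (cases "t < T")
    case True
    have "(?X has_vector_derivative ((B0 + (\<Sum>i\<in>{1..m}. u i t *\<^sub>R B i)) ** X t)) (at t within {0..T})"
      by (rule has_vector_derivative_transform_within[where d=1, OF deriv[rule_format]])
        (use True t in auto)
    then show ?thesis using True at_within_Icc_shrink[OF True, of "T + \<tau>"] \<open>0 < \<tau>\<close> by simp
  next
    case False
    then have "T < t" using t by auto
    have "(?X has_vector_derivative (A ** mat_exp ((t - T) *\<^sub>R A) ** X T)) (at t)"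
      by (rule has_vector_derivative_transform_within_open[where S="{T<..}",
            OF mat_exp_shift_has_vector_derivative]) (use \<open>T < t\<close> in auto)
    then show ?thesis
      using \<open>T < t\<close> by (simp add: A matrix_mul_assoc has_vector_derivative_at_within)
  qed
  have "0 \<le> T + \<tau>" "?X 0 = mat 1" "finite (insert T D)"
    using \<open>0 \<le> T\<close> \<open>0 < \<tau>\<close> \<open>X 0 = mat 1\<close> \<open>finite D\<close> by simp_all
  then show ?thesis
    unfolding is_trajectory_def using cont_X pc_u deriv_X by blast
qed

lemma mat_exp_mult_in_reachable_set:
  assumes "Y \<in> reachable_set B0 m B" and "0 < \<tau>"
  shows "mat_exp (\<tau> *\<^sub>R (B0 + (\<Sum>i\<in>{1..m}. v i *\<^sub>R B i))) ** Y \<in> reachable_set B0 m B"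
proof -
  obtain T u X where traj: "is_trajectory B0 m B u T X" and "Y = X T"
    using assms(1) unfolding reachable_set_def by blast
  moreover have "0 \<le> T" using traj unfolding is_trajectory_def by simp
  ultimately show ?thesis
    using is_trajectory_append_constant[OF traj \<open>0 < \<tau>\<close> refl, of v] \<open>0 < \<tau>\<close>
    unfolding reachable_set_def by (intro CollectI exI[of _ "T + \<tau>"] exI conjI) auto
qed

section \<open>Accessibility from the Lie algebra rank condition\<close>

definition commutator :: "real^'n^'n \<Rightarrow> real^'n^'n \<Rightarrow> real^'n::finite^'n" where
  "commutator X Y = X ** Y - Y ** X"

text \<open>The least subspace containing \<open>AA\<close> and invariant under all \<open>ad A\<close>, \<open>A \<in> AA\<close>, is the Lie
  algebra generated by \<open>AA\<close> (by the Jacobi identity), so this is the usual rank condition.\<close>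

definition lie_rank_condition :: "(real^'n::finite^'n) set \<Rightarrow> bool" where
  "lie_rank_condition AA \<longleftrightarrow>
     (\<forall>V. subspace V \<and> AA \<subseteq> V \<and> (\<forall>X\<in>V. \<forall>A\<in>AA. commutator X A \<in> V) \<longrightarrow> V = UNIV)"

text \<open>A schedule \<open>[(A\<^sub>1, s\<^sub>1), \<dots>, (A\<^sub>k, s\<^sub>k)]\<close> is run from right to left: its flow is
  \<open>exp(s\<^sub>1 A\<^sub>1) \<cdots> exp(s\<^sub>k A\<^sub>k)\<close>, and its tangent directions are the derivatives of the flow in the
  durations \<open>s\<^sub>i\<close>, transported back to the identity by right multiplication with the inverse flow.\<close>

type_synonym 'n schedule = "((real^'n^'n) \<times> real) list"

primrec flow :: "('n::finite) schedule \<Rightarrow> real^'n^'n" where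
  "flow [] = mat 1"
| "flow (p # c) = mat_exp (snd p *\<^sub>R fst p) ** flow c"

primrec flow_inv :: "('n::finite) schedule \<Rightarrow> real^'n^'n" where
  "flow_inv [] = mat 1"
| "flow_inv (p # c) = flow_inv c ** mat_exp ((- snd p) *\<^sub>R fst p)"

definition exp_conj :: "real^'n^'n \<Rightarrow> real \<Rightarrow> real^'n^'n \<Rightarrow> real^'n::finite^'n" where
  "exp_conj A s X = mat_exp (s *\<^sub>R A) ** X ** mat_exp ((- s) *\<^sub>R A)"

primrec tangent_directions :: "('n::finite) schedule \<Rightarrow> (real^'n^'n) list" where
  "tangent_directions [] = []"
| "tangent_directions (p # c) = fst p # map (exp_conj (fst p) (snd p)) (tangent_directions c)"

definition admissible :: "(real^'n^'n) set \<Rightarrow> ('n::finite) schedule \<Rightarrow> bool" where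
  "admissible AA c \<longleftrightarrow> (\<forall>p\<in>set c. fst p \<in> AA \<and> snd p > 0)"

lemma admissible_simps [simp]:
  "admissible AA []"
  "admissible AA (p # c) \<longleftrightarrow> fst p \<in> AA \<and> snd p > 0 \<and> admissible AA c"
  "admissible AA (c @ d) \<longleftrightarrow> admissible AA c \<and> admissible AA d"
  unfolding admissible_def by auto

lemma flow_inv_flow: "flow_inv c ** flow c = mat 1"
proof (induction c)
  case (Cons p c)
  have "flow_inv (p # c) ** flow (p # c)
      = flow_inv c ** (mat_exp ((- snd p) *\<^sub>R fst p) ** mat_exp (snd p *\<^sub>R fst p)) ** flow c"
    by (simp add: matrix_mul_assoc)
  also have "\<dots> = mat 1" by (simp only: mat_exp_minus_left matrix_mul_rid Cons.IH)
  finally show ?case .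
qed simp

lemma exp_conj_self: "exp_conj A s A = A"
proof -
  have "exp_conj A s A = A ** (mat_exp (s *\<^sub>R A) ** mat_exp ((- s) *\<^sub>R A))"
    unfolding exp_conj_def by (simp add: mat_exp_commute matrix_mul_assoc)
  then show ?thesis by (simp only: mat_exp_minus_right matrix_mul_rid)
qed

lemma linear_exp_conj: "linear (exp_conj A s)"
  unfolding exp_conj_def[abs_def] by (rule linear_matrix_sandwich)

lemma inj_exp_conj: "inj (exp_conj A s)"
  unfolding exp_conj_def[abs_def] by (rule inj_matrix_sandwich[OF mat_exp_minus_left mat_exp_minus_right])

lemma length_tangent_directions [simp]: "length (tangent_directions c) = length c"
  by (induction c) auto

lemma tangent_directions_append:
  "tangent_directions (p @ c) = tangent_directions p @ map (\<lambda>X. flow p ** X ** flow_inv p) (tangent_directions c)"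
  by (induction p) (simp_all add: exp_conj_def comp_def matrix_mul_assoc)

lemma dim_tangent_directions_Cons:
  "dim (set (tangent_directions ((A, s) # c))) = dim (insert A (set (tangent_directions c)))"
proof -
  have "set (tangent_directions ((A, s) # c)) = exp_conj A s ` insert A (set (tangent_directions c))"
    by (simp add: exp_conj_self)
  then show ?thesis
    using dim_image_eq[OF linear_exp_conj] inj_exp_conj by (metis inj_on_subset subset_UNIV)
qed

lemma dim_conj_tangent_directions:
  "dim ((\<lambda>X. flow p ** X ** flow_inv p) ` set (tangent_directions c)) = dim (set (tangent_directions c))"
proof (rule dim_image_eq[OF linear_matrix_sandwich])
  show "inj_on (\<lambda>X. flow p ** X ** flow_inv p) (span (set (tangent_directions c)))"
    using inj_matrix_sandwich[OF flow_inv_flow flow_inv_flow] by (rule inj_on_subset) simp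
qed

lemma conj_tangent_directions_subset:
  "(\<lambda>X. flow p ** X ** flow_inv p) ` set (tangent_directions c) \<subseteq> set (tangent_directions (p @ c))"
  unfolding tangent_directions_append by auto

definition max_rank_schedule :: "(real^'n^'n) set \<Rightarrow> ('n::finite) schedule \<Rightarrow> bool" where
  "max_rank_schedule AA c \<longleftrightarrow> admissible AA c \<and>
     (\<forall>c'. admissible AA c' \<longrightarrow> dim (set (tangent_directions c')) \<le> dim (set (tangent_directions c)))"

lemma exists_max_rank_schedule: "\<exists>c. max_rank_schedule AA (c :: ('n::finite) schedule)"
proof -
  have "\<forall>c. admissible AA c \<longrightarrow> dim (set (tangent_directions c)) < Suc DIM(real^'n^'n)"
    using dim_subset_UNIV le_imp_less_Suc by blast
  from Lattices_Big.ex_has_greatest_nat[of "admissible AA" "[]", OF _ this]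
  show ?thesis unfolding max_rank_schedule_def by simp
qed

lemma max_rank_schedule_append:
  assumes "max_rank_schedule AA c" "admissible AA p"
  shows "max_rank_schedule AA (p @ c)"
proof -
  have "dim (set (tangent_directions c)) \<le> dim (set (tangent_directions (p @ c)))"
    using dim_subset[OF conj_tangent_directions_subset] dim_conj_tangent_directions by metis
  then show ?thesis using assms unfolding max_rank_schedule_def by (meson admissible_simps(3) le_trans)
qed

lemma max_rank_schedule_span:
  assumes "max_rank_schedule AA c" "A \<in> AA"
  shows "A \<in> span (set (tangent_directions c))"
proof -
  have "admissible AA ((A, 1) # c)" using assms unfolding max_rank_schedule_def by simp
  then have "dim (insert A (set (tangent_directions c))) \<le> dim (set (tangent_directions c))"
    using assms(1) dim_tangent_directions_Cons unfolding max_rank_schedule_def by metis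
  then show ?thesis using dim_insert[of A "set (tangent_directions c)"] by (auto split: if_splits)
qed

lemma max_rank_schedule_conj_span:
  assumes c: "max_rank_schedule AA c" and p: "admissible AA p" and "A \<in> AA"
  shows "flow_inv p ** A ** flow p \<in> span (set (tangent_directions c))"
proof -
  let ?conj = "\<lambda>X. flow p ** X ** flow_inv p"
  have "dim (set (tangent_directions (p @ c))) \<le> dim (?conj ` set (tangent_directions c))"
    using c p max_rank_schedule_append unfolding dim_conj_tangent_directions max_rank_schedule_def by blast
  then have "span (?conj ` set (tangent_directions c)) = span (set (tangent_directions (p @ c)))"
    by (intro subspace_dim_equal span_mono conj_tangent_directions_subset) simp_all
  moreover have "A \<in> span (set (tangent_directions (p @ c)))"
    using max_rank_schedule_span[OF max_rank_schedule_append[OF c p] \<open>A \<in> AA\<close>] .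
  ultimately obtain Z where "Z \<in> span (set (tangent_directions c))" "A = ?conj Z"
    unfolding linear_span_image[OF linear_matrix_sandwich] by blast
  moreover have "flow_inv p ** ?conj Z ** flow p = Z"
    by (simp add: matrix_mul_assoc flow_inv_flow) (simp add: matrix_mul_assoc[symmetric] flow_inv_flow)
  ultimately show ?thesis by simp
qed

lemma vector_derivative_in_closed_subspace:
  fixes f :: "real \<Rightarrow> 'a::euclidean_space"
  assumes "(f has_vector_derivative f') (at 0)" and W: "subspace W"
    and pos: "\<And>\<tau>. \<tau> > 0 \<Longrightarrow> f \<tau> \<in> W" and "f 0 \<in> W"
  shows "f' \<in> W"
proof -
  have "(f has_derivative (\<lambda>x. x *\<^sub>R f')) (at 0 within {0<..})"
    using assms(1) unfolding has_vector_derivative_def by (rule has_derivative_subset) simp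
  then have "((\<lambda>y. ((f y - f 0) - (y - 0) *\<^sub>R f') /\<^sub>R norm (y - 0)) \<longlongrightarrow> 0) (at 0 within {0<..})"
    by (simp add: has_derivative_at_within)
  moreover have "\<forall>\<^sub>F y in at 0 within {0<..}.
      ((f y - f 0) - (y - 0) *\<^sub>R f') /\<^sub>R norm (y - 0) = (f y - f 0) /\<^sub>R y - f'"
    by (auto simp: eventually_at_filter scaleR_diff_right)
  ultimately have "((\<lambda>y. (f y - f 0) /\<^sub>R y - f') \<longlongrightarrow> 0) (at 0 within {0<..})"
    using tendsto_cong by fastforce
  then have lim: "((\<lambda>y. (f y - f 0) /\<^sub>R y) \<longlongrightarrow> f') (at 0 within {0<..})"
    using Lim_null by blast
  have "\<forall>\<^sub>F y in at 0 within {0<..}. (f y - f 0) /\<^sub>R y \<in> W"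
    using pos \<open>f 0 \<in> W\<close> W by (auto simp: eventually_at_filter subspace_diff subspace_scale)
  from Lim_in_closed_set[OF closed_subspace[OF W] this _ lim] show ?thesis by simp
qed

lemma exp_conj_has_vector_derivative:
  fixes A X P Q :: "real^'n::finite^'n"
  shows "((\<lambda>\<tau>. P ** exp_conj A (- \<tau>) X ** Q) has_vector_derivative (P ** commutator X A ** Q)) (at 0)"
proof -
  have "((\<lambda>\<tau>. mat_exp (\<tau> *\<^sub>R (- A)) ** X) has_vector_derivative ((- A) ** mat_exp (0 *\<^sub>R (- A))) ** X) (at 0)"
    by (rule bounded_linear.has_vector_derivative[OF bounded_linear_matrix_mult_right mat_exp_has_vector_derivative])
  from bounded_bilinear.has_vector_derivative[OF bounded_bilinear_matrix_mult this mat_exp_has_vector_derivative]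
  have "((\<lambda>\<tau>. exp_conj A (- \<tau>) X) has_vector_derivative commutator X A) (at 0)"
    by (simp add: exp_conj_def commutator_def matrix_mul_lneg)
  from bounded_linear.has_vector_derivative[OF bounded_linear_matrix_sandwich this]
  show ?thesis .
qed

text \<open>Maximality of the rank forces the span of the tangent directions to be invariant under
  conjugation by admissible flows; differentiating such conjugations gives invariance under \<open>ad A\<close>.\<close>

lemma max_rank_schedule_span_UNIV:
  assumes rank: "lie_rank_condition AA" and c: "max_rank_schedule AA c"
  shows "span (set (tangent_directions c)) = UNIV"
proof -
  define W where "W = span (set (tangent_directions c))"
  define V where "V = {X. \<forall>p. admissible AA p \<longrightarrow> flow_inv p ** X ** flow p \<in> W}"
  have "subspace W" unfolding W_def by (rule subspace_span)
  have "subspace V"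
  proof -
    have "V = (\<Inter>p\<in>{p. admissible AA p}. {X. flow_inv p ** X ** flow p \<in> W})"
      unfolding V_def by blast
    then show ?thesis
      using linear_subspace_linear_preimage[OF linear_matrix_sandwich \<open>subspace W\<close>]
      by (auto intro: subspace_Inter)
  qed
  moreover have "AA \<subseteq> V"
    unfolding V_def W_def using max_rank_schedule_conj_span[OF c] by blast
  moreover have "commutator X A \<in> V" if "X \<in> V" "A \<in> AA" for X A
    unfolding V_def
  proof (intro CollectI allI impI)
    fix p assume p: "admissible AA p"
    have "flow_inv p ** exp_conj A (- \<tau>) X ** flow p \<in> W" if "\<tau> > 0" for \<tau>
    proof -
      have "admissible AA ((A, \<tau>) # p)" using p \<open>A \<in> AA\<close> that by simp
      then have "flow_inv ((A, \<tau>) # p) ** X ** flow ((A, \<tau>) # p) \<in> W"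
        using \<open>X \<in> V\<close> unfolding V_def by blast
      then show ?thesis by (simp add: exp_conj_def matrix_mul_assoc)
    qed
    moreover have "flow_inv p ** exp_conj A (- 0) X ** flow p \<in> W"
      using \<open>X \<in> V\<close> p unfolding V_def exp_conj_def by simp
    ultimately show "flow_inv p ** commutator X A ** flow p \<in> W"
      by (intro vector_derivative_in_closed_subspace[OF exp_conj_has_vector_derivative \<open>subspace W\<close>])
  qed
  ultimately have "V = UNIV"
    using rank unfolding lie_rank_condition_def by blast
  then have "flow_inv [] ** Y ** flow [] \<in> W" for Y
    unfolding V_def using admissible_simps(1) by blast
  then show ?thesis unfolding W_def by auto
qed

lemma span_set_list_coeffs:
  fixes x :: "'a::real_vector"
  shows "x \<in> span (set xs) \<Longrightarrow> \<exists>a. x = (\<Sum>k<length xs. a k *\<^sub>R xs ! k)"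
proof (induction xs arbitrary: x)
  case (Cons y xs)
  then obtain t where "x - t *\<^sub>R y \<in> span (set xs)"
    using span_breakdown_eq[of x y "set xs"] by auto
  then obtain a where a: "x - t *\<^sub>R y = (\<Sum>k<length xs. a k *\<^sub>R xs ! k)" using Cons.IH by blast
  define a' where "a' = (\<lambda>k. if k = 0 then t else a (k - 1))"
  have "(\<Sum>k<length (y # xs). a' k *\<^sub>R (y # xs) ! k) = t *\<^sub>R y + (\<Sum>k<length xs. a k *\<^sub>R xs ! k)"
    unfolding a'_def by (simp add: sum.lessThan_Suc_shift del: sum.lessThan_Suc)
  then show ?case using a by (metis add.commute diff_add_cancel)
qed simp

lemma exists_coordinate_functionals:
  fixes xs :: "('a::euclidean_space) list"
  assumes "span (set xs) = UNIV"
  shows "\<exists>\<Lambda>::nat \<Rightarrow> 'a \<Rightarrow> real. (\<forall>k. linear (\<Lambda> k)) \<and> (\<forall>Y. (\<Sum>k<length xs. \<Lambda> k Y *\<^sub>R xs ! k) = Y)"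
proof -
  have "\<forall>b. \<exists>a. b = (\<Sum>k<length xs. a k *\<^sub>R xs ! k)"
    using span_set_list_coeffs assms by blast
  then obtain a where a: "\<And>b. b = (\<Sum>k<length xs. a b k *\<^sub>R xs ! k)" by metis
  define \<Lambda> where "\<Lambda> = (\<lambda>k Y. \<Sum>b\<in>Basis. (Y \<bullet> b) * a b k)"
  have "linear (\<Lambda> k)" for k
    unfolding \<Lambda>_def
    by (auto intro!: linearI simp: inner_add_left sum.distrib distrib_right sum_distrib_left mult.assoc)
  moreover have "(\<Sum>k<length xs. \<Lambda> k Y *\<^sub>R xs ! k) = Y" for Y
  proof -
    have "(\<Sum>k<length xs. \<Lambda> k Y *\<^sub>R xs ! k) = (\<Sum>k<length xs. \<Sum>b\<in>Basis. (Y \<bullet> b) *\<^sub>R (a b k *\<^sub>R xs ! k))"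
      unfolding \<Lambda>_def by (simp add: scaleR_sum_left)
    also have "\<dots> = (\<Sum>b\<in>Basis. (Y \<bullet> b) *\<^sub>R (\<Sum>k<length xs. a b k *\<^sub>R xs ! k))"
      by (subst sum.swap) (simp add: scaleR_sum_right)
    also have "\<dots> = (\<Sum>b\<in>Basis. (Y \<bullet> b) *\<^sub>R b)" using a[symmetric] by simp
    also have "\<dots> = Y" by (rule euclidean_representation)
    finally show ?thesis .
  qed
  ultimately show ?thesis by blast
qed

primrec perturbed_flow ::
  "('n::finite) schedule \<Rightarrow> (nat \<Rightarrow> real^'n^'n \<Rightarrow> real) \<Rightarrow> real^'n^'n \<Rightarrow> real^'n^'n" where
  "perturbed_flow [] \<Lambda> h = mat 1"
| "perturbed_flow (p # c) \<Lambda> h = mat_exp ((snd p + \<Lambda> 0 h) *\<^sub>R fst p) ** perturbed_flow c (\<lambda>k. \<Lambda> (Suc k)) h"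

definition tangent_combination ::
  "('n::finite) schedule \<Rightarrow> (nat \<Rightarrow> real^'n^'n \<Rightarrow> real) \<Rightarrow> real^'n^'n \<Rightarrow> real^'n^'n" where
  "tangent_combination c \<Lambda> h = (\<Sum>k<length c. \<Lambda> k h *\<^sub>R tangent_directions c ! k)"

lemma perturbed_flow_zero: "(\<And>k. \<Lambda> k 0 = 0) \<Longrightarrow> perturbed_flow c \<Lambda> 0 = flow c"
  by (induction c arbitrary: \<Lambda>) auto

lemma tangent_combination_Cons:
  "tangent_combination ((A, s) # c) \<Lambda> h
     = \<Lambda> 0 h *\<^sub>R A + exp_conj A s (tangent_combination c (\<lambda>k. \<Lambda> (Suc k)) h)"
proof -
  have "tangent_combination ((A, s) # c) \<Lambda> h
      = \<Lambda> 0 h *\<^sub>R A + (\<Sum>k<length c. \<Lambda> (Suc k) h *\<^sub>R exp_conj A s (tangent_directions c ! k))"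
    unfolding tangent_combination_def by (simp add: sum.lessThan_Suc_shift del: sum.lessThan_Suc)
  also have "(\<Sum>k<length c. \<Lambda> (Suc k) h *\<^sub>R exp_conj A s (tangent_directions c ! k))
      = exp_conj A s (tangent_combination c (\<lambda>k. \<Lambda> (Suc k)) h)"
    unfolding tangent_combination_def by (simp add: linear_sum[OF linear_exp_conj] linear_scale[OF linear_exp_conj])
  finally show ?thesis .
qed

lemma perturbed_flow_has_derivative:
  assumes "\<And>k. linear (\<Lambda> k)"
  shows "(perturbed_flow c \<Lambda> has_derivative (\<lambda>h. tangent_combination c \<Lambda> h ** flow c)) (at 0)"
  using assms
proof (induction c arbitrary: \<Lambda>)
  case Nil
  show ?case by (simp add: tangent_combination_def)
next
  case (Cons p c)
  obtain A s where p: "p = (A, s)" by (cases p)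
  have zero: "\<Lambda> k 0 = 0" for k by (rule linear_0[OF Cons.prems])
  let ?\<Lambda>' = "\<lambda>k. \<Lambda> (Suc k)"
  have "((\<lambda>h. s + \<Lambda> 0 h) has_derivative \<Lambda> 0) (at 0)"
    using Cons.prems linear_conv_bounded_linear
    by (auto intro!: derivative_eq_intros bounded_linear_imp_has_derivative)
  from has_derivative_compose[OF this mat_exp_has_vector_derivative[unfolded has_vector_derivative_def]]
  have "((\<lambda>h. mat_exp ((s + \<Lambda> 0 h) *\<^sub>R A)) has_derivative (\<lambda>h. \<Lambda> 0 h *\<^sub>R (A ** mat_exp (s *\<^sub>R A)))) (at 0)"
    using zero by simp
  from bounded_bilinear.FDERIV[OF bounded_bilinear_matrix_mult this Cons.IH[of ?\<Lambda>']]
  have "((\<lambda>h. mat_exp ((s + \<Lambda> 0 h) *\<^sub>R A) ** perturbed_flow c ?\<Lambda>' h) has_derivative (\<lambda>h. mat_exp (s *\<^sub>R A) ** (tangent_combination c ?\<Lambda>' h ** flow c)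
      + (\<Lambda> 0 h *\<^sub>R (A ** mat_exp (s *\<^sub>R A))) ** flow c)) (at 0)"
    using Cons.prems perturbed_flow_zero[of ?\<Lambda>' c] zero by simp
  moreover have "perturbed_flow (p # c) \<Lambda> = (\<lambda>h. mat_exp ((s + \<Lambda> 0 h) *\<^sub>R A) ** perturbed_flow c ?\<Lambda>' h)"
    by (simp add: p fun_eq_iff)
  moreover have "mat_exp (s *\<^sub>R A) ** (tangent_combination c ?\<Lambda>' h ** flow c)
      + (\<Lambda> 0 h *\<^sub>R (A ** mat_exp (s *\<^sub>R A))) ** flow c = tangent_combination (p # c) \<Lambda> h ** flow (p # c)" for h
  proof -
    let ?T = "tangent_combination c ?\<Lambda>' h"
    have "tangent_combination (p # c) \<Lambda> h ** flow (p # c)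
        = (\<Lambda> 0 h *\<^sub>R A + mat_exp (s *\<^sub>R A) ** ?T ** mat_exp ((- s) *\<^sub>R A)) ** (mat_exp (s *\<^sub>R A) ** flow c)"
      by (simp add: p tangent_combination_Cons exp_conj_def)
    also have "\<dots> = \<Lambda> 0 h *\<^sub>R (A ** mat_exp (s *\<^sub>R A) ** flow c)
        + mat_exp (s *\<^sub>R A) ** ?T ** (mat_exp ((- s) *\<^sub>R A) ** mat_exp (s *\<^sub>R A)) ** flow c"
      by (simp add: matrix_add_rdistrib matrix_mul_assoc scalar_matrix_assoc)
    also have "\<dots> = \<Lambda> 0 h *\<^sub>R (A ** mat_exp (s *\<^sub>R A) ** flow c) + mat_exp (s *\<^sub>R A) ** ?T ** flow c"
      by (simp only: mat_exp_minus_left matrix_mul_rid)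
    finally show ?thesis by (simp add: matrix_mul_assoc scalar_matrix_assoc add.commute)
  qed
  ultimately show ?case by simp
qed

lemma continuous_on_perturbed_flow:
  assumes "\<And>k. linear (\<Lambda> k)"
  shows "continuous_on UNIV (perturbed_flow c \<Lambda>)"
  using assms
proof (induction c arbitrary: \<Lambda>)
  case (Cons p c)
  have "bounded_linear (\<Lambda> 0)" using Cons.prems linear_conv_bounded_linear by blast
  then have "continuous_on UNIV (\<lambda>h. snd p + \<Lambda> 0 h)"
    by (intro continuous_intros linear_continuous_on)
  then have "continuous_on UNIV (\<lambda>h. mat_exp ((snd p + \<Lambda> 0 h) *\<^sub>R fst p))"
    by (rule continuous_on_compose2[OF continuous_on_mat_exp]) auto
  then show ?case
    using bounded_bilinear.continuous_on[OF bounded_bilinear_matrix_mult _ Cons.IH] Cons.prems by simp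
qed simp

lemma perturbed_flow_in_reachable_set:
  assumes "AA \<subseteq> {B0 + (\<Sum>i\<in>{1..m}. v i *\<^sub>R B i) | v. True}"
  shows "admissible AA c \<Longrightarrow> \<forall>k<length c. 0 < snd (c ! k) + \<Lambda> k h \<Longrightarrow>
    perturbed_flow c \<Lambda> h \<in> reachable_set B0 m B"
proof (induction c arbitrary: \<Lambda>)
  case Nil
  then show ?case using mat_1_in_reachable_set by simp
next
  case (Cons p c)
  have "perturbed_flow c (\<lambda>k. \<Lambda> (Suc k)) h \<in> reachable_set B0 m B"
    using Cons by fastforce
  moreover obtain v where "fst p = B0 + (\<Sum>i\<in>{1..m}. v i *\<^sub>R B i)"
    using assms Cons.prems(1) by auto
  moreover have "0 < snd p + \<Lambda> 0 h" using Cons.prems(2) by force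
  ultimately show ?case using mat_exp_mult_in_reachable_set by simp
qed

lemma det_perturbed_flow_pos: "det (perturbed_flow c \<Lambda> h) > 0"
  by (induction c arbitrary: \<Lambda>) (simp_all add: det_mul det_mat_exp_pos)

text \<open>For a maximal rank schedule the derivative of the perturbed flow is onto, so the open mapping
  theorem puts the flow in the interior of the flows reached with positive durations.\<close>

lemma accessible_if_lie_rank_condition:
  assumes controls: "AA \<subseteq> {B0 + (\<Sum>i\<in>{1..m}. v i *\<^sub>R B i) | v. True}"
    and "lie_rank_condition AA"
  shows "accessible B0 m B"
proof -
  obtain c where c: "max_rank_schedule AA c" using exists_max_rank_schedule by blast
  then have "admissible AA c" unfolding max_rank_schedule_def by simp
  obtain \<Lambda> where lin: "\<And>k. linear (\<Lambda> k)"
    and coord: "\<And>Y. (\<Sum>k<length (tangent_directions c). \<Lambda> k Y *\<^sub>R tangent_directions c ! k) = Y"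
    using exists_coordinate_functionals[OF max_rank_schedule_span_UNIV[OF assms(2) c]] by blast
  define U where "U = (\<Inter>k<length c. {h. 0 < snd (c ! k) + \<Lambda> k h})"
  have "bounded_linear (\<Lambda> k)" for k using lin linear_conv_bounded_linear by blast
  then have "open U"
    unfolding U_def by (intro open_INT ballI open_Collect_less continuous_intros linear_continuous_on) auto
  moreover have "0 \<in> U"
    using \<open>admissible AA c\<close> linear_0[OF lin] unfolding U_def admissible_def by (auto simp: nth_mem)
  moreover have deriv: "(perturbed_flow c \<Lambda> has_derivative (\<lambda>h. h ** flow c)) (at 0)"
  proof -
    have "tangent_combination c \<Lambda> h = h" for h
      using coord unfolding tangent_combination_def by simp
    then show ?thesis using perturbed_flow_has_derivative[where \<Lambda>=\<Lambda> and c=c, OF lin] by simp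
  qed
  moreover have "(\<lambda>h. h ** flow c) \<circ> (\<lambda>Y. Y ** flow_inv c) = id"
    by (rule ext) (simp add: matrix_mul_assoc[symmetric] flow_inv_flow)
  ultimately have "perturbed_flow c \<Lambda> 0 \<in> interior (perturbed_flow c \<Lambda> ` U)"
    using sussmann_open_mapping[OF open_UNIV continuous_on_perturbed_flow[where \<Lambda>=\<Lambda>, OF lin]
        UNIV_I deriv bounded_linear_matrix_mult_right] by (metis interior_open subset_UNIV)
  moreover have "perturbed_flow c \<Lambda> ` U \<subseteq> reachable_set B0 m B \<inter> GLp"
    using perturbed_flow_in_reachable_set[OF controls \<open>admissible AA c\<close>] det_perturbed_flow_pos
    unfolding U_def GLp_def by auto
  ultimately show ?thesis
    unfolding accessible_def openin_open
    by (intro exI[of _ "interior (perturbed_flow c \<Lambda> ` U)"] conjI exI[of _ "interior (perturbed_flow c \<Lambda> ` U)"])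
      (use interior_subset in blast)+
qed

section \<open>Lie subalgebras and ideals of \<open>gl(n)\<close>\<close>

definition lie_subalgebra :: "(real^'n::finite^'n) set \<Rightarrow> bool" where
  "lie_subalgebra L \<longleftrightarrow> subspace L \<and> (\<forall>X\<in>L. \<forall>Y\<in>L. commutator X Y \<in> L)"

definition lie_ideal :: "(real^'n::finite^'n) set \<Rightarrow> bool" where
  "lie_ideal V \<longleftrightarrow> subspace V \<and> (\<forall>X\<in>V. \<forall>Y. commutator X Y \<in> V)"

definition diagonal :: "real^'n^'n \<Rightarrow> bool" where
  "diagonal H \<longleftrightarrow> (\<forall>r s. r \<noteq> s \<longrightarrow> H $ r $ s = 0)"

lemma Emat_nth: "Emat a b $ i $ j = (if i = a \<and> j = b then 1 else 0)"
  unfolding Emat_def by simp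

lemma Emat_mult_left: "(Emat a b ** X) $ i $ j = (if i = a then X $ b $ j else 0)"
  unfolding matrix_matrix_mult_def Emat_def by (simp add: if_distrib if_distribR sum.delta cong: if_cong)

lemma Emat_mult_right: "(X ** Emat a b) $ i $ j = (if j = b then X $ i $ a else 0)"
  unfolding matrix_matrix_mult_def Emat_def by (simp add: if_distrib if_distribR sum.delta' cong: if_cong)

lemma Emat_mult: "Emat a b ** Emat c d = (if b = c then Emat a d else 0)"
  by (simp add: vec_eq_iff Emat_mult_left Emat_nth)

lemma Emat_eq_iff: "Emat a b = Emat c d \<longleftrightarrow> a = c \<and> b = d"
  by (auto simp: vec_eq_iff Emat_nth)

lemma diagonal_Emat_diff: "diagonal (Emat a a - Emat b b)"
  unfolding diagonal_def by (simp add: Emat_nth)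

lemma trace_Emat: "trace (Emat a b) = (if a = b then 1 else 0)"
  unfolding trace_def Emat_nth by (cases "a = b") (auto intro: sum.neutral)

lemma commutator_Emat:
  "commutator (Emat a b) (Emat c d) = (if b = c then Emat a d else 0) - (if d = a then Emat c b else 0)"
  unfolding commutator_def by (simp add: Emat_mult)

lemma commutator_add_right: "commutator H (X + Y) = commutator H X + commutator H Y"
  unfolding commutator_def by (simp add: matrix_add_ldistrib matrix_add_rdistrib)

lemma commutator_scaleR_right: "commutator H (r *\<^sub>R X) = r *\<^sub>R commutator H X"
  unfolding commutator_def by (simp add: matrix_scalar_ac scalar_matrix_assoc[symmetric] scaleR_diff_right)

lemma commutator_diff_left: "commutator (X - Y) H = commutator X H - commutator Y H"
  unfolding commutator_def by (simp add: matrix_diff_rdistrib matrix_diff_ldistrib)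

lemma commutator_jacobi: "commutator X (commutator Y Z) = commutator (commutator X Y) Z - commutator (commutator X Z) Y"
  unfolding commutator_def by (simp add: matrix_diff_ldistrib matrix_diff_rdistrib matrix_mul_assoc)

lemma commutator_diagonal_nth:
  assumes "diagonal H"
  shows "commutator H X $ r $ s = (H $ r $ r - H $ s $ s) * X $ r $ s"
proof -
  have "(H ** X) $ r $ s = H $ r $ r * X $ r $ s"
    using assms unfolding matrix_matrix_mult_def diagonal_def
    by (simp, subst sum.remove[of _ r], auto intro!: sum.neutral)
  moreover have "(X ** H) $ r $ s = X $ r $ s * H $ s $ s"
    using assms unfolding matrix_matrix_mult_def diagonal_def
    by (simp, subst sum.remove[of _ s], auto intro!: sum.neutral)
  ultimately show ?thesis unfolding commutator_def by (simp add: algebra_simps)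
qed

lemma commutator_diagonal_Emat:
  assumes "diagonal H"
  shows "commutator H (Emat a b) = (H $ a $ a - H $ b $ b) *\<^sub>R Emat a b"
  using commutator_diagonal_nth[OF assms] by (auto simp: vec_eq_iff Emat_nth)

lemma diagonal_sum_Emat_nth: "(\<Sum>a\<in>UNIV. f a *\<^sub>R Emat a a) $ r $ s = (if r = s then f r else (0::real))"
proof -
  have "(\<Sum>a\<in>UNIV. f a *\<^sub>R Emat a a) $ r $ s = (\<Sum>a\<in>UNIV. if a = r then (if r = s then f r else 0) else 0)"
    unfolding sum_component vector_scaleR_component by (rule sum.cong) (auto simp: Emat_nth)
  then show ?thesis by simp
qed

lemma sum_Emat_nth: "(\<Sum>a\<in>UNIV. \<Sum>b\<in>UNIV. f a b *\<^sub>R Emat a b) $ i $ j = (f i j :: real)"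
proof -
  have "(\<Sum>a\<in>UNIV. \<Sum>b\<in>UNIV. f a b *\<^sub>R Emat a b) $ i $ j = (\<Sum>a\<in>UNIV. \<Sum>b\<in>UNIV. f a b * Emat a b $ i $ j)"
    by simp
  also have "\<dots> = (\<Sum>a\<in>UNIV. if a = i then f i j else 0)"
    by (rule sum.cong) (auto simp: Emat_nth if_distrib cong: if_cong)
  finally show ?thesis by simp
qed

lemma matrix_eq_sum_Emat: "X = (\<Sum>a\<in>UNIV. \<Sum>b\<in>UNIV. X $ a $ b *\<^sub>R Emat a b)"
  by (simp only: vec_eq_iff sum_Emat_nth) simp

lemma subspace_eq_UNIV_if_Emat:
  fixes S :: "(real^'n::finite^'n) set"
  assumes S: "subspace S" and off: "\<And>a b. a \<noteq> b \<Longrightarrow> Emat a b \<in> S"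
    and diff: "\<And>a b. Emat a a - Emat b b \<in> S"
    and "T \<in> S" and "trace T \<noteq> 0"
  shows "S = UNIV"
proof -
  have diff_mem: "X \<in> S" if "Y = Z + X" "Y \<in> S" "Z \<in> S" for X Y Z
    using subspace_diff[OF S \<open>Y \<in> S\<close> \<open>Z \<in> S\<close>] that(1) by simp
  let ?off = "\<Sum>a\<in>UNIV. \<Sum>b\<in>UNIV. (if a = b then 0 else T $ a $ b) *\<^sub>R Emat a b"
  let ?diag = "\<Sum>a\<in>UNIV. T $ a $ a *\<^sub>R Emat a a"
  have "?off \<in> S"
    by (intro subspace_sum[OF S] ballI) (auto intro: subspace_scale[OF S] off simp: subspace_0[OF S])
  moreover have "T = ?off + ?diag"
    by (simp only: vec_eq_iff vector_add_component sum_Emat_nth diagonal_sum_Emat_nth) simp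
  ultimately have "?diag \<in> S" using diff_mem \<open>T \<in> S\<close> by blast
  have diag: "Emat x x \<in> S" for x
  proof -
    have "?diag = (\<Sum>a\<in>UNIV. T $ a $ a *\<^sub>R (Emat a a - Emat x x)) + trace T *\<^sub>R Emat x x"
      unfolding trace_def by (simp add: scaleR_diff_right sum_subtractf scaleR_sum_left)
    moreover have "(\<Sum>a\<in>UNIV. T $ a $ a *\<^sub>R (Emat a a - Emat x x)) \<in> S"
      by (intro subspace_sum[OF S] subspace_scale[OF S] diff)
    ultimately have "trace T *\<^sub>R Emat x x \<in> S"
      using diff_mem \<open>?diag \<in> S\<close> by blast
    from subspace_scale[OF S this, of "inverse (trace T)"] show ?thesis
      using \<open>trace T \<noteq> 0\<close> by simp
  qed
  have "Emat a b \<in> S" for a b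
    using off diag by (cases "a = b") auto
  then have "(\<Sum>a\<in>UNIV. \<Sum>b\<in>UNIV. X $ a $ b *\<^sub>R Emat a b) \<in> S" for X
    by (intro subspace_sum[OF S] subspace_scale[OF S])
  then have "X \<in> S" for X by (simp only: matrix_eq_sum_Emat[symmetric])
  then show ?thesis by blast
qed

lemma lie_subalgebra_eq_UNIV:
  assumes L: "lie_subalgebra L" and off: "\<And>a b. a \<noteq> b \<Longrightarrow> Emat a b \<in> L"
    and "T \<in> L" "trace T \<noteq> 0"
  shows "L = UNIV"
proof (rule subspace_eq_UNIV_if_Emat)
  show "subspace L" using L unfolding lie_subalgebra_def by simp
  show "Emat a a - Emat b b \<in> L" for a b
  proof (cases "a = b")
    case True then show ?thesis using \<open>subspace L\<close> by (simp add: subspace_0)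
  next
    case False
    then have "Emat a b \<in> L" "Emat b a \<in> L" using off by auto
    then have "commutator (Emat a b) (Emat b a) \<in> L" using L unfolding lie_subalgebra_def by blast
    then show ?thesis using False by (simp add: commutator_Emat)
  qed
qed (use assms in auto)

lemma lie_ideal_eq_UNIV:
  assumes V: "lie_ideal V" and "Emat x y \<in> V" "x \<noteq> y" and "T \<in> V" "trace T \<noteq> 0"
  shows "V = UNIV"
proof -
  have "subspace V" and ideal: "\<And>X Y. X \<in> V \<Longrightarrow> commutator X Y \<in> V"
    using V unfolding lie_ideal_def by auto
  have row: "Emat x b \<in> V" if "b \<noteq> x" for b
    using ideal[OF \<open>Emat x y \<in> V\<close>, of "Emat y b"] \<open>Emat x y \<in> V\<close> that
    by (cases "b = y") (auto simp: commutator_Emat)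
  have col: "Emat a x \<in> V" if "a \<noteq> x" for a
  proof -
    have "Emat x x - Emat a a \<in> V"
      using ideal[OF row[of a], of "Emat a x"] that by (simp add: commutator_Emat)
    from ideal[OF this, of "Emat a x"]
    have "(-2) *\<^sub>R Emat a x \<in> V"
      using that by (simp add: commutator_diff_left commutator_Emat scaleR_2)
    then show ?thesis using subspace_scale[OF \<open>subspace V\<close>, of _ "- 1/2"] by fastforce
  qed
  have "Emat a b \<in> V" if "a \<noteq> b" for a b
  proof (cases "a = x \<or> b = x")
    case True then show ?thesis using row col that by auto
  next
    case False
    then have "- Emat a b \<in> V"
      using ideal[OF row[of b], of "Emat a x"] that by (simp add: commutator_Emat)
    then show ?thesis using subspace_neg[OF \<open>subspace V\<close>] by fastforce
  qed
  moreover have "lie_subalgebra V"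
    using V unfolding lie_ideal_def lie_subalgebra_def by blast
  ultimately show ?thesis using lie_subalgebra_eq_UNIV \<open>T \<in> V\<close> \<open>trace T \<noteq> 0\<close> by blast
qed

text \<open>The normaliser of \<open>V\<close> is a Lie subalgebra (Jacobi identity) containing \<open>AA\<close>.\<close>

lemma ad_invariant_subspace_is_lie_ideal:
  assumes gen: "\<And>L. lie_subalgebra L \<Longrightarrow> AA \<subseteq> L \<Longrightarrow> L = UNIV"
    and V: "subspace V" and inv: "\<forall>X\<in>V. \<forall>A\<in>AA. commutator X A \<in> V"
  shows "lie_ideal V"
proof -
  define N where "N = {Y. \<forall>X\<in>V. commutator X Y \<in> V}"
  have "subspace N"
    unfolding subspace_def N_def
    by (auto simp: commutator_def commutator_add_right[unfolded commutator_def]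
        commutator_scaleR_right[unfolded commutator_def] V subspace_0 subspace_add subspace_scale)
  moreover have "commutator Y Z \<in> N" if "Y \<in> N" "Z \<in> N" for Y Z
    using that unfolding N_def by (auto simp: commutator_jacobi intro: subspace_diff[OF V])
  ultimately have "lie_subalgebra N" unfolding lie_subalgebra_def by blast
  moreover have "AA \<subseteq> N" using inv unfolding N_def by blast
  ultimately have "N = UNIV" by (rule gen)
  then show ?thesis using V unfolding lie_ideal_def N_def by blast
qed

section \<open>Lie subalgebras generated by a drift and a contraction pattern\<close>

lemma commutator_Emat_commutator_Emat:
  assumes "p \<noteq> c" "d \<noteq> a"
  shows "commutator (Emat a p) (commutator (Emat c d) X) = - (X $ p $ c *\<^sub>R Emat a d + X $ d $ a *\<^sub>R Emat c p)"
  using assms by (auto simp: vec_eq_iff commutator_def Emat_mult_left Emat_mult_right Emat_nth)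

lemma commutator_commutator_Emat:
  assumes "x \<noteq> y" "y' \<noteq> u"
  shows "commutator (commutator (Emat u x) X) (Emat y y') = X $ x $ y *\<^sub>R Emat u y' + X $ y' $ u *\<^sub>R Emat y x"
  using assms by (auto simp: vec_eq_iff commutator_def Emat_mult_left Emat_mult_right Emat_nth)

lemma commutator_Emat_commutator:
  assumes "z' \<noteq> a" "b \<noteq> z"
  shows "commutator (Emat z z') (commutator X (Emat a b)) = X $ z' $ a *\<^sub>R Emat z b + X $ b $ z *\<^sub>R Emat a z'"
  using assms by (auto simp: vec_eq_iff commutator_def Emat_mult_left Emat_mult_right Emat_nth)

text \<open>The weight 3 on the self-loop at \<open>v0\<close> separates two-node components of \<open>Pb\<close> which
  the brackets with the contraction directions cannot tell apart (see \<open>exists_cross_block\<close>).\<close>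

definition drift_witness :: "('n \<times> 'n) set \<Rightarrow> 'n \<Rightarrow> real^'n::finite^'n" where
  "drift_witness Pa v0 = (\<chi> i j. if (i, j) \<in> Pa then if i = v0 \<and> j = v0 then 3 else 1 else 0)"

lemma drift_witness_nth:
  "drift_witness Pa v0 $ i $ j = (if (i, j) \<in> Pa then if i = v0 \<and> j = v0 then 3 else 1 else 0)"
  unfolding drift_witness_def by simp

locale pattern_subalgebra =
  fixes L :: "(real^'n::finite^'n) set" and Pa Pb :: "('n \<times> 'n) set" and v0 :: 'n
  assumes lie_subalgebra: "lie_subalgebra L"
    and drift_mem: "drift_witness Pa v0 \<in> L"
    and control_mem: "\<And>a b. (a, b) \<in> Pb \<Longrightarrow> Emat a b \<in> L"
    and components: "\<forall>v. card (weak_component Pb v) \<ge> 2 \<and> strongly_connected_set Pb (weak_component Pb v)"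
    and union_strongly_connected: "strongly_connected_set (Pa \<union> Pb) UNIV"
    and self_loop: "(v0, v0) \<in> Pa \<union> Pb"
begin

abbreviation B0 where "B0 \<equiv> drift_witness Pa v0"

lemma L_subspace: "subspace L"
  using lie_subalgebra unfolding lie_subalgebra_def by simp

lemma commutator_mem: "X \<in> L \<Longrightarrow> Y \<in> L \<Longrightarrow> commutator X Y \<in> L"
  using lie_subalgebra unfolding lie_subalgebra_def by simp

definition same_comp :: "'n \<Rightarrow> 'n \<Rightarrow> bool" where
  "same_comp x y \<longleftrightarrow> y \<in> weak_component Pb x"

lemma same_comp_refl [simp]: "same_comp x x"
  unfolding same_comp_def weak_component_def by simp

lemma same_comp_sym: "same_comp x y \<Longrightarrow> same_comp y x"
proof -
  assume "same_comp x y"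
  then have "(y, x) \<in> ((Pb \<union> Pb\<inverse>)\<^sup>*)\<inverse>" unfolding same_comp_def weak_component_def by simp
  also have "((Pb \<union> Pb\<inverse>)\<^sup>*)\<inverse> = (Pb \<union> Pb\<inverse>)\<^sup>*"
    by (simp add: rtrancl_converse[symmetric] converse_Un) (subst Un_commute, rule refl)
  finally show "same_comp y x" unfolding same_comp_def weak_component_def by simp
qed

lemma same_comp_trans: "same_comp x y \<Longrightarrow> same_comp y z \<Longrightarrow> same_comp x z"
  unfolding same_comp_def weak_component_def by simp

lemma same_comp_if_arc: "(a, b) \<in> Pb \<Longrightarrow> same_comp a b"
  unfolding same_comp_def weak_component_def by auto

lemma weak_component_eq: "same_comp x y \<Longrightarrow> weak_component Pb x = weak_component Pb y"
  using same_comp_sym same_comp_trans unfolding same_comp_def by blast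

lemma ne_if_not_same_comp: "\<not> same_comp a b \<Longrightarrow> same_comp a a' \<Longrightarrow> same_comp b b' \<Longrightarrow> a' \<noteq> b'"
  using same_comp_sym same_comp_trans by blast

lemma not_same_comp_cong: "\<not> same_comp a b \<Longrightarrow> same_comp a a' \<Longrightarrow> same_comp b b' \<Longrightarrow> \<not> same_comp a' b'"
  using same_comp_sym same_comp_trans by blast

lemma exists_other_in_comp: "\<exists>y. same_comp x y \<and> y \<noteq> x"
proof -
  have "card (weak_component Pb x) \<ge> 2" using components by blast
  then have "\<not> weak_component Pb x \<subseteq> {x}"
    using card_mono[of "{x}" "weak_component Pb x"] by auto
  then show ?thesis unfolding same_comp_def by blast
qed

lemma rtrancl_if_same_comp: "same_comp x y \<Longrightarrow> (x, y) \<in> Pb\<^sup>*"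
proof -
  assume "same_comp x y"
  have "strongly_connected_set Pb (weak_component Pb x)" using components by blast
  then have "(x, y) \<in> (Pb \<inter> (weak_component Pb x \<times> weak_component Pb x))\<^sup>*"
    unfolding strongly_connected_set_def using \<open>same_comp x y\<close> same_comp_refl unfolding same_comp_def by blast
  then show ?thesis using rtrancl_mono[of "Pb \<inter> _" Pb] by blast
qed

lemma union_rtrancl: "(v, w) \<in> (Pa \<union> Pb)\<^sup>*"
  using union_strongly_connected unfolding strongly_connected_set_def by simp

lemma cross_arc_in_drift: "(y, z) \<in> Pa \<union> Pb \<Longrightarrow> \<not> same_comp y z \<Longrightarrow> (y, z) \<in> Pa"
  using same_comp_if_arc by blast

lemma drift_nonzero: "(x, y) \<in> Pa \<Longrightarrow> B0 $ x $ y \<noteq> 0"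
  by (simp add: drift_witness_nth)

lemma Emat_mem_if_same_comp: "same_comp x y \<Longrightarrow> x \<noteq> y \<Longrightarrow> Emat x y \<in> L"
proof -
  assume "same_comp x y" "x \<noteq> y"
  have "(x, y) \<in> Pb\<^sup>*" by (rule rtrancl_if_same_comp) fact
  then show ?thesis using \<open>x \<noteq> y\<close>
  proof (induction rule: rtrancl_induct)
    case (step z w)
    show ?case
    proof (cases "x = z")
      case True then show ?thesis using step control_mem by simp
    next
      case False
      then have "commutator (Emat x z) (Emat z w) \<in> L" using commutator_mem control_mem step by blast
      then show ?thesis using step.prems by (simp add: commutator_Emat)
    qed
  qed simp
qed

lemma diag_diff_mem_if_same_comp: "same_comp x y \<Longrightarrow> Emat x x - Emat y y \<in> L"
proof (cases "x = y")
  case True then show ?thesis using subspace_0[OF L_subspace] by simp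
next
  case False
  assume "same_comp x y"
  then have "commutator (Emat x y) (Emat y x) \<in> L"
    using commutator_mem Emat_mem_if_same_comp same_comp_sym False by metis
  then show ?thesis using False by (simp add: commutator_Emat)
qed

text \<open>\<open>[H, Y] - w\<^sub>2 Y\<close> kills the \<open>E\<^sub>c\<^sub>d\<close>-component of \<open>Y\<close>.\<close>

lemma Emat_mem_if_separated:
  assumes H: "H \<in> L" "diagonal H" and Y: "Y \<in> L" "Y = \<alpha> *\<^sub>R Emat a b + \<beta> *\<^sub>R Emat c d"
    and w: "H $ a $ a - H $ b $ b \<noteq> H $ c $ c - H $ d $ d" and "\<alpha> \<noteq> 0"
  shows "Emat a b \<in> L"
proof -
  define w1 where "w1 = H $ a $ a - H $ b $ b"
  define w2 where "w2 = H $ c $ c - H $ d $ d"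
  have "commutator H Y - w2 *\<^sub>R Y = (\<alpha> * (w1 - w2)) *\<^sub>R Emat a b"
    unfolding Y(2) commutator_add_right commutator_scaleR_right commutator_diagonal_Emat[OF H(2)] w1_def w2_def
    by (simp add: algebra_simps)
  moreover have "commutator H Y - w2 *\<^sub>R Y \<in> L"
    using commutator_mem[OF H(1) Y(1)] Y(1) by (simp add: subspace_diff[OF L_subspace] subspace_scale[OF L_subspace])
  ultimately have "(1 / (\<alpha> * (w1 - w2))) *\<^sub>R ((\<alpha> * (w1 - w2)) *\<^sub>R Emat a b) \<in> L"
    by (metis subspace_scale[OF L_subspace])
  then show ?thesis using \<open>\<alpha> \<noteq> 0\<close> w unfolding w1_def w2_def by simp
qed

text \<open>The eigenvalues of \<open>ad (E\<^sub>x\<^sub>x - E\<^sub>y\<^sub>y)\<close> lie in \<open>{0, \<plusminus>1, \<plusminus>2}\<close>, and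
  \<open>(w\<^sup>2 - 1)(w\<^sup>2 - 4)/4\<close> is the indicator of \<open>w = 0\<close> there.\<close>

lemma exists_weight_zero_part:
  assumes "X \<in> L" "same_comp x y" "x \<noteq> y"
  shows "\<exists>Y\<in>L. \<forall>r s. Y $ r $ s = (if (r = x) = (s = x) \<and> (r = y) = (s = y) then X $ r $ s else 0)"
proof -
  define H where "H = Emat x x - Emat y y"
  have "H \<in> L" unfolding H_def by (rule diag_diff_mem_if_same_comp) fact
  define h where "h = (\<lambda>r. H $ r $ r)"
  have ad: "commutator H Z $ r $ s = (h r - h s) * Z $ r $ s" for Z r s
    unfolding h_def H_def by (rule commutator_diagonal_nth[OF diagonal_Emat_diff])
  define Y where "Y = (1/4) *\<^sub>R (commutator H (commutator H (commutator H (commutator H X)))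
      - 5 *\<^sub>R commutator H (commutator H X) + 4 *\<^sub>R X)"
  have "Y \<in> L" unfolding Y_def
    using commutator_mem[OF \<open>H \<in> L\<close>] \<open>X \<in> L\<close>
    by (intro subspace_scale[OF L_subspace] subspace_add[OF L_subspace] subspace_diff[OF L_subspace])
      (auto intro: subspace_scale[OF L_subspace])
  moreover have "Y $ r $ s = (if (r = x) = (s = x) \<and> (r = y) = (s = y) then X $ r $ s else 0)" for r s
  proof -
    have Y_nth: "Y $ r $ s = (1/4) * ((h r - h s)^4 - 5 * (h r - h s)^2 + 4) * X $ r $ s"
      unfolding Y_def by (simp add: ad algebra_simps power2_eq_square power4_eq_xxxx)
    have "h r = (if r = x then 1 else if r = y then -1 else 0)" for r
      unfolding h_def H_def using \<open>x \<noteq> y\<close> by (auto simp: Emat_nth)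
    then show ?thesis unfolding Y_nth using \<open>x \<noteq> y\<close> by auto
  qed
  ultimately show ?thesis by blast
qed

lemma exists_mem_diagonal_outside:
  assumes "X \<in> L" "finite F"
  shows "\<exists>Y\<in>L. (\<forall>r. Y $ r $ r = X $ r $ r) \<and> (\<forall>r s. r \<noteq> s \<and> (r \<in> F \<or> s \<in> F) \<longrightarrow> Y $ r $ s = 0)"
  using \<open>finite F\<close>
proof (induction F rule: finite_induct)
  case empty show ?case using \<open>X \<in> L\<close> by (intro bexI[of _ X]) auto
next
  case (insert x F)
  then obtain Y where Y: "Y \<in> L" "\<forall>r. Y $ r $ r = X $ r $ r"
    "\<forall>r s. r \<noteq> s \<and> (r \<in> F \<or> s \<in> F) \<longrightarrow> Y $ r $ s = 0"
    by blast
  obtain y where "same_comp x y" "x \<noteq> y" using exists_other_in_comp by metis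
  from exists_weight_zero_part[OF Y(1) this] obtain Y' where "Y' \<in> L"
    and Y': "\<forall>r s. Y' $ r $ s = (if (r = x) = (s = x) \<and> (r = y) = (s = y) then Y $ r $ s else 0)"
    by blast
  then show ?case using Y by (intro bexI[of _ Y']) auto
qed

lemma diagonal_part_mem:
  assumes "X \<in> L"
  shows "(\<Sum>a\<in>UNIV. X $ a $ a *\<^sub>R Emat a a) \<in> L"
proof -
  obtain Y where "Y \<in> L" "\<forall>r. Y $ r $ r = X $ r $ r" "\<forall>r s. r \<noteq> s \<longrightarrow> Y $ r $ s = 0"
    using exists_mem_diagonal_outside[OF assms, of UNIV] by auto
  moreover have "Y = (\<Sum>a\<in>UNIV. X $ a $ a *\<^sub>R Emat a a)"
    using calculation by (simp only: vec_eq_iff diagonal_sum_Emat_nth) auto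
  ultimately show ?thesis by simp
qed

definition full_block :: "'n \<Rightarrow> 'n \<Rightarrow> bool" where
  "full_block x y \<longleftrightarrow> (\<forall>x' y'. same_comp x x' \<longrightarrow> same_comp y y' \<longrightarrow> Emat x' y' \<in> L)"

lemma full_block_if_Emat_mem:
  assumes ns: "\<not> same_comp x y" and E: "Emat x y \<in> L"
  shows "full_block x y"
  unfolding full_block_def
proof (intro allI impI)
  fix x' y' assume x': "same_comp x x'" and y': "same_comp y y'"
  have E1: "Emat x' y \<in> L"
  proof (cases "x' = x")
    case True then show ?thesis using E by simp
  next
    case False
    have "commutator (Emat x' x) (Emat x y) \<in> L" using commutator_mem Emat_mem_if_same_comp[OF same_comp_sym[OF x'] False] E by blast
    moreover have "y \<noteq> x'" using ns x' by auto
    ultimately show ?thesis by (simp add: commutator_Emat)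
  qed
  show "Emat x' y' \<in> L"
  proof (cases "y' = y")
    case True then show ?thesis using E1 by simp
  next
    case False
    have "commutator (Emat x' y) (Emat y y') \<in> L" using commutator_mem Emat_mem_if_same_comp[OF y'] False E1 by metis
    moreover have "y' \<noteq> x'" using ns x' y' same_comp_sym same_comp_trans by metis
    ultimately show ?thesis by (simp add: commutator_Emat)
  qed
qed

lemma full_block_cong: "full_block x y \<Longrightarrow> same_comp x x1 \<Longrightarrow> same_comp y y1 \<Longrightarrow> full_block x1 y1"
  unfolding full_block_def using same_comp_trans by blast

lemma Emat_mem_if_full_block: "full_block x y \<Longrightarrow> Emat x y \<in> L"
  unfolding full_block_def by simp

lemma full_block_trans:
  assumes "full_block x y" "full_block y z" "\<not> same_comp x z"
  shows "full_block x z"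
proof -
  have "commutator (Emat x y) (Emat y z) \<in> L" using assms Emat_mem_if_full_block commutator_mem by blast
  moreover have "z \<noteq> x" using assms(3) by auto
  ultimately show ?thesis using assms(3) full_block_if_Emat_mem by (simp add: commutator_Emat)
qed

lemma full_block_extend_right:
  assumes e: "full_block a b" and arc: "(x, y) \<in> Pa" and xb: "same_comp b x" and ya: "\<not> same_comp a y"
    and yx: "\<not> same_comp x y" and ab: "\<not> same_comp a b"
  shows "full_block a y"
proof -
  obtain a' where a': "same_comp a a'" "a' \<noteq> a" using exists_other_in_comp by blast
  obtain y' where y': "same_comp y y'" "y' \<noteq> y" using exists_other_in_comp by blast
  have Eax: "Emat a x \<in> L" using e xb unfolding full_block_def by simp
  have y'a: "y' \<noteq> a" using ne_if_not_same_comp[OF ya same_comp_refl y'(1)] by simp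
  have xy: "x \<noteq> y" using yx by auto
  have Z: "commutator (commutator (Emat a x) B0) (Emat y y') \<in> L"
    using commutator_mem[OF commutator_mem[OF Eax drift_mem] Emat_mem_if_same_comp[OF y'(1) y'(2)[symmetric]]] .
  have Zf: "commutator (commutator (Emat a x) B0) (Emat y y') = B0 $ x $ y *\<^sub>R Emat a y' + B0 $ y' $ a *\<^sub>R Emat y x"
    by (rule commutator_commutator_Emat[OF xy y'a])
  have HL: "Emat a a - Emat a' a' \<in> L" by (rule diag_diff_mem_if_same_comp[OF a'(1)])
  have xa: "\<not> same_comp a x" using not_same_comp_cong[OF ab same_comp_refl xb] .
  have ne: "y' \<noteq> a'" "y \<noteq> a" "y \<noteq> a'" "x \<noteq> a" "x \<noteq> a'"
    using ne_if_not_same_comp[OF ya a'(1) y'(1)] ne_if_not_same_comp[OF ya same_comp_refl same_comp_refl] ne_if_not_same_comp[OF ya a'(1) same_comp_refl]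
      ne_if_not_same_comp[OF xa same_comp_refl same_comp_refl] ne_if_not_same_comp[OF xa a'(1) same_comp_refl] by auto
  have w: "(Emat a a - Emat a' a') $ a $ a - (Emat a a - Emat a' a') $ y' $ y' \<noteq>
      (Emat a a - Emat a' a') $ y $ y - (Emat a a - Emat a' a') $ x $ x"
    using ne y'a a'(2) by (simp add: Emat_nth)
  have "Emat a y' \<in> L"
    by (rule Emat_mem_if_separated[OF HL diagonal_Emat_diff Z Zf w drift_nonzero[OF arc]])
  then have "full_block a y'" by (rule full_block_if_Emat_mem[rotated]) (rule not_same_comp_cong[OF ya same_comp_refl y'(1)])
  then show ?thesis using full_block_cong[OF _ same_comp_refl same_comp_sym[OF y'(1)]] by blast
qed

lemma full_block_extend_left:
  assumes e: "full_block a b" and arc: "(z', a1) \<in> Pa" and aa1: "same_comp a a1" and za: "\<not> same_comp z' a"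
    and zb: "\<not> same_comp z' b" and ab: "\<not> same_comp a b"
  shows "full_block z' b"
proof -
  obtain z where z: "same_comp z' z" "z \<noteq> z'" using exists_other_in_comp by blast
  obtain b' where b': "same_comp b b'" "b' \<noteq> b" using exists_other_in_comp by blast
  have Eab: "Emat a1 b \<in> L" using e aa1 unfolding full_block_def by simp
  have Z: "commutator (Emat z z') (commutator B0 (Emat a1 b)) \<in> L"
    using commutator_mem[OF Emat_mem_if_same_comp[OF same_comp_sym[OF z(1)] z(2)] commutator_mem[OF drift_mem Eab]] .
  have n1: "z' \<noteq> a1" using ne_if_not_same_comp[OF za same_comp_refl aa1] .
  have n2: "b \<noteq> z" using ne_if_not_same_comp[OF zb z(1) same_comp_refl] by simp
  have Zf: "commutator (Emat z z') (commutator B0 (Emat a1 b)) = B0 $ z' $ a1 *\<^sub>R Emat z b + B0 $ b $ z *\<^sub>R Emat a1 z'"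
    by (rule commutator_Emat_commutator[OF n1 n2])
  have HL: "Emat b b - Emat b' b' \<in> L" by (rule diag_diff_mem_if_same_comp[OF b'(1)])
  have a1b: "\<not> same_comp a1 b" using not_same_comp_cong[OF ab aa1 same_comp_refl] .
  have ne: "z \<noteq> b" "z \<noteq> b'" "a1 \<noteq> b" "a1 \<noteq> b'" "z' \<noteq> b" "z' \<noteq> b'"
    using ne_if_not_same_comp[OF zb z(1) same_comp_refl] ne_if_not_same_comp[OF zb z(1) b'(1)] ne_if_not_same_comp[OF a1b same_comp_refl same_comp_refl]
      ne_if_not_same_comp[OF a1b same_comp_refl b'(1)] ne_if_not_same_comp[OF zb same_comp_refl same_comp_refl] ne_if_not_same_comp[OF zb same_comp_refl b'(1)] by auto
  have w: "(Emat b b - Emat b' b') $ z $ z - (Emat b b - Emat b' b') $ b $ b \<noteq>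
      (Emat b b - Emat b' b') $ a1 $ a1 - (Emat b b - Emat b' b') $ z' $ z'"
    using ne b'(2) by (simp add: Emat_nth)
  have "Emat z b \<in> L"
    by (rule Emat_mem_if_separated[OF HL diagonal_Emat_diff Z Zf w drift_nonzero[OF arc]])
  then have "full_block z b" by (rule full_block_if_Emat_mem[rotated]) (rule not_same_comp_cong[OF zb z(1) same_comp_refl])
  then show ?thesis using full_block_cong[OF _ same_comp_sym[OF z(1)] same_comp_refl] by blast
qed

lemma full_block_reverse:
  assumes e: "full_block b a" and arc: "(p, c) \<in> Pa" and ap: "same_comp a p" and bc: "same_comp b c" and ab: "\<not> same_comp a b"
  shows "full_block a b"
proof -
  obtain a' where a': "same_comp p a'" "a' \<noteq> p" using exists_other_in_comp by blast
  obtain d where d: "same_comp c d" "d \<noteq> c" using exists_other_in_comp by blast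
  have pc: "\<not> same_comp p c" using not_same_comp_cong[OF ab ap bc] .
  have n1: "p \<noteq> c" using pc by auto
  have n2: "d \<noteq> a'" using ne_if_not_same_comp[OF pc a'(1) d(1)] by simp
  have Y: "commutator (Emat a' p) (commutator (Emat c d) B0) \<in> L"
    using commutator_mem[OF Emat_mem_if_same_comp[OF same_comp_sym[OF a'(1)] a'(2)] commutator_mem[OF Emat_mem_if_same_comp[OF d(1) d(2)[symmetric]] drift_mem]] .
  have Yf: "commutator (Emat a' p) (commutator (Emat c d) B0) = - (B0 $ p $ c *\<^sub>R Emat a' d + B0 $ d $ a' *\<^sub>R Emat c p)"
    by (rule commutator_Emat_commutator_Emat[OF n1 n2])
  have Ecp: "Emat c p \<in> L" using e bc ap unfolding full_block_def by simp
  have "B0 $ p $ c *\<^sub>R Emat a' d = - commutator (Emat a' p) (commutator (Emat c d) B0) - B0 $ d $ a' *\<^sub>R Emat c p"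
    unfolding Yf by simp
  also have "\<dots> \<in> L"
    using Y Ecp by (intro subspace_diff[OF L_subspace] subspace_neg[OF L_subspace] subspace_scale[OF L_subspace])
  finally have "B0 $ p $ c *\<^sub>R Emat a' d \<in> L" .
  then have "(1 / B0 $ p $ c) *\<^sub>R (B0 $ p $ c *\<^sub>R Emat a' d) \<in> L" by (rule subspace_scale[OF L_subspace])
  then have "Emat a' d \<in> L" using drift_nonzero[OF arc] by simp
  then have "full_block a' d" by (rule full_block_if_Emat_mem[rotated]) (rule not_same_comp_cong[OF pc a'(1) d(1)])
  then show ?thesis
    using full_block_cong[OF _ same_comp_trans[OF same_comp_sym[OF a'(1)] same_comp_sym[OF ap]] same_comp_trans[OF same_comp_sym[OF d(1)] same_comp_sym[OF bc]]] by blast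
qed

lemma full_block_if_separated:
  assumes arc: "(p, c) \<in> Pa" and pc: "\<not> same_comp p c" and H: "H \<in> L" "diagonal H"
    and p': "same_comp p p'" "p' \<noteq> p" and c': "same_comp c c'" "c' \<noteq> c"
    and w: "H $ p' $ p' - H $ c' $ c' \<noteq> H $ c $ c - H $ p $ p"
  shows "full_block p c"
proof -
  have n1: "p \<noteq> c" using pc by auto
  have n2: "c' \<noteq> p'" using ne_if_not_same_comp[OF pc p'(1) c'(1)] by simp
  have Y: "commutator (Emat p' p) (commutator (Emat c c') B0) \<in> L"
    using commutator_mem[OF Emat_mem_if_same_comp[OF same_comp_sym[OF p'(1)] p'(2)] commutator_mem[OF Emat_mem_if_same_comp[OF c'(1) c'(2)[symmetric]] drift_mem]] .
  have Yf: "commutator (Emat p' p) (commutator (Emat c c') B0) = (- B0 $ p $ c) *\<^sub>R Emat p' c' + (- B0 $ c' $ p') *\<^sub>R Emat c p"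
    using commutator_Emat_commutator_Emat[OF n1 n2, where X=B0] by simp
  have "Emat p' c' \<in> L"
    by (rule Emat_mem_if_separated[OF H Y Yf w]) (use drift_nonzero[OF arc] in simp)
  then have "full_block p' c'" by (rule full_block_if_Emat_mem[rotated]) (rule not_same_comp_cong[OF pc p'(1) c'(1)])
  then show ?thesis using full_block_cong[OF _ same_comp_sym[OF p'(1)] same_comp_sym[OF c'(1)]] by blast
qed

lemma exists_cross_arc:
  assumes "(x, y) \<in> (Pa \<union> Pb)\<^sup>*" "\<not> same_comp x y"
  shows "\<exists>p c. (p, c) \<in> Pa \<and> same_comp x p \<and> \<not> same_comp p c"
  using assms
proof (induction rule: rtrancl_induct)
  case base then show ?case by simp
next
  case (step y z)
  show ?case
  proof (cases "same_comp x y")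
    case True
    then have "\<not> same_comp y z" using step.prems same_comp_trans by blast
    then have "(y, z) \<in> Pa" using cross_arc_in_drift step.hyps(2) by blast
    then show ?thesis using True \<open>\<not> same_comp y z\<close> by blast
  next
    case False then show ?thesis using step.IH by blast
  qed
qed

text \<open>A full block \<open>(p\<^sub>0, m)\<close> whose reverse \<open>(m, p\<^sub>0)\<close> is also full serves as a hub: full blocks
  propagate from and to \<open>p\<^sub>0\<close> along the arcs of the strongly connected union graph.\<close>

lemma exists_two_way_block:
  assumes "full_block p0 c0" "\<not> same_comp p0 c0"
  shows "\<exists>m. \<not> same_comp m p0 \<and> full_block p0 m \<and> full_block m p0"
proof (rule ccontr)
  assume no_hub: "\<nexists>m. \<not> same_comp m p0 \<and> full_block p0 m \<and> full_block m p0"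
  have "\<not> same_comp p0 y \<and> full_block p0 y" if "(c0, y) \<in> (Pa \<union> Pb)\<^sup>*" for y
    using that
  proof (induction rule: rtrancl_induct)
    case (step y z)
    then have y: "\<not> same_comp p0 y" "full_block p0 y" by simp_all
    show ?case
    proof (cases "same_comp y z")
      case True
      then show ?thesis using not_same_comp_cong[OF y(1) same_comp_refl] full_block_cong[OF y(2) same_comp_refl] by blast
    next
      case False
      then have arc: "(y, z) \<in> Pa" by (rule cross_arc_in_drift[OF step.hyps(2)])
      have "\<not> same_comp p0 z"
      proof
        assume "same_comp p0 z"
        moreover have "\<not> same_comp y p0" using y(1) same_comp_sym by blast
        ultimately have "full_block y p0" by (rule full_block_reverse[OF y(2) arc same_comp_refl])
        then show False using no_hub y \<open>\<not> same_comp y p0\<close> by blast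
      qed
      then show ?thesis using full_block_extend_right[OF y(2) arc same_comp_refl _ False y(1)] by blast
    qed
  qed (use assms in simp)
  from this[OF union_rtrancl, of p0] show False by simp
qed

lemma full_block_from_hub:
  assumes hub: "\<not> same_comp m p0" "full_block p0 m" "full_block m p0"
  shows "full_block p0 y \<or> same_comp p0 y"
  using union_rtrancl[of p0 y]
proof (induction rule: rtrancl_induct)
  case (step y z)
  show ?case
  proof (rule disjCI)
    assume z: "\<not> same_comp p0 z"
    consider "same_comp y z" | "\<not> same_comp y z" "\<not> same_comp p0 y"
      | "\<not> same_comp y z" "same_comp p0 y" "same_comp m z" | "\<not> same_comp y z" "same_comp p0 y" "\<not> same_comp m z"
      by blast
    then show "full_block p0 z"
    proof cases
      case 1
      then show ?thesis using step.IH z full_block_cong[OF _ same_comp_refl 1] same_comp_trans by blast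
    next
      case 2
      then show ?thesis
        using step.IH full_block_extend_right[OF _ cross_arc_in_drift[OF step.hyps(2)] same_comp_refl z] by blast
    next
      case 3
      then show ?thesis using full_block_cong[OF hub(2) same_comp_refl] by blast
    next
      case 4
      then have "full_block m z"
        using full_block_extend_right[OF hub(3) cross_arc_in_drift[OF step.hyps(2)]] hub(1) by blast
      then show ?thesis using full_block_trans[OF hub(2) _ z] by blast
    qed
  qed
qed simp

lemma full_block_to_hub:
  assumes hub: "\<not> same_comp m p0" "full_block p0 m" "full_block m p0"
  shows "full_block z p0 \<or> same_comp z p0"
  using union_rtrancl[of z p0]
proof (induction rule: converse_rtrancl_induct)
  case (step z y)
  show ?case
  proof (rule disjCI)
    assume z: "\<not> same_comp z p0"
    have "\<not> same_comp p0 m" using hub(1) same_comp_sym by blast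
    consider "same_comp z y" | "\<not> same_comp z y" "\<not> same_comp y p0"
      | "\<not> same_comp z y" "same_comp y p0" "same_comp z m" | "\<not> same_comp z y" "same_comp y p0" "\<not> same_comp z m"
      by blast
    then show "full_block z p0"
    proof cases
      case 1
      then show ?thesis
        using step.IH z full_block_cong[OF _ same_comp_sym[OF 1] same_comp_refl] same_comp_trans by blast
    next
      case 2
      then show ?thesis
        using step.IH full_block_extend_left[OF _ cross_arc_in_drift[OF step.hyps(1)] same_comp_refl] z by blast
    next
      case 3
      then show ?thesis using full_block_cong[OF hub(3) same_comp_sym same_comp_refl] by blast
    next
      case 4
      then have "full_block z m"
        using full_block_extend_left[OF hub(2) cross_arc_in_drift[OF step.hyps(1)] same_comp_sym[OF 4(2)] z]
          \<open>\<not> same_comp p0 m\<close> by blast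
      then show ?thesis using full_block_trans[OF _ hub(3) z] by blast
    qed
  qed
qed simp

lemma Emat_mem_if_cross_block:
  assumes "full_block p0 c0" "\<not> same_comp p0 c0" and xy: "\<not> same_comp x y"
  shows "Emat x y \<in> L"
proof -
  obtain m where hub: "\<not> same_comp m p0" "full_block p0 m" "full_block m p0"
    using exists_two_way_block[OF assms(1,2)] by blast
  consider "same_comp x p0" | "same_comp p0 y" | "\<not> same_comp x p0" "\<not> same_comp p0 y" by blast
  then have "full_block x y"
  proof cases
    case 1
    then have "\<not> same_comp p0 y" using xy same_comp_trans by blast
    then show ?thesis
      using full_block_from_hub[OF hub, of y] full_block_cong[OF _ same_comp_sym[OF 1] same_comp_refl] by blast
  next
    case 2
    then have "\<not> same_comp x p0" using xy same_comp_trans same_comp_sym by blast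
    then show ?thesis using full_block_to_hub[OF hub, of x] full_block_cong[OF _ same_comp_refl 2] by blast
  next
    case 3
    then show ?thesis using full_block_from_hub[OF hub] full_block_to_hub[OF hub] full_block_trans xy by blast
  qed
  then show ?thesis by (rule Emat_mem_if_full_block)
qed

lemma exists_anchor_diagonal:
  "\<exists>H v. H \<in> L \<and> diagonal H \<and> (\<forall>a. 0 \<le> H $ a $ a) \<and> H $ v $ v = 3 \<and> (\<forall>a. a \<noteq> v \<longrightarrow> H $ a $ a \<le> 1)"
proof (cases "(v0, v0) \<in> Pb")
  case True
  have "3 *\<^sub>R Emat v0 v0 \<in> L" using control_mem[OF True] by (rule subspace_scale[OF L_subspace])
  moreover have "diagonal (3 *\<^sub>R Emat v0 v0)" unfolding diagonal_def by (simp add: Emat_nth)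
  ultimately show ?thesis by (intro exI[of _ "3 *\<^sub>R Emat v0 v0"] exI[of _ v0]) (auto simp: Emat_nth)
next
  case False
  then have "(v0, v0) \<in> Pa" using self_loop by blast
  define H where "H = (\<Sum>a\<in>UNIV. B0 $ a $ a *\<^sub>R Emat a a)"
  have "H \<in> L" unfolding H_def by (rule diagonal_part_mem[OF drift_mem])
  moreover have "diagonal H" unfolding diagonal_def H_def diagonal_sum_Emat_nth by simp
  moreover have "H $ a $ a = B0 $ a $ a" for a unfolding H_def diagonal_sum_Emat_nth by simp
  ultimately show ?thesis
    using \<open>(v0, v0) \<in> Pa\<close> by (intro exI[of _ H] exI[of _ v0]) (auto simp: drift_witness_nth)
qed

lemma exists_third_in_comp:
  assumes "card (weak_component Pb x) \<noteq> 2" "same_comp x x'"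
  shows "\<exists>e. same_comp x e \<and> e \<noteq> x \<and> e \<noteq> x'"
proof -
  have "card (weak_component Pb x) \<ge> 2" using components by blast
  then have "\<not> weak_component Pb x \<subseteq> {x, x'}"
    using assms(1) card_mono[of "{x, x'}" "weak_component Pb x"] by (auto simp: card_insert_if split: if_splits)
  then show ?thesis unfolding same_comp_def by blast
qed

lemma weak_component_eq_pair:
  assumes "card (weak_component Pb x) = 2" "same_comp x y" "y \<noteq> x"
  shows "weak_component Pb x = {x, y}"
proof -
  have "{x, y} \<subseteq> weak_component Pb x" using assms(2) same_comp_refl unfolding same_comp_def by blast
  moreover have "card {x, y} = card (weak_component Pb x)" using assms by simp
  ultimately show ?thesis by (intro card_subset_eq[symmetric]) auto
qed

definition comp_weight :: "real^'n^'n \<Rightarrow> 'n \<Rightarrow> real" where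
  "comp_weight H x = (\<Sum>z\<in>weak_component Pb x. H $ z $ z)"

text \<open>A third node \<open>e\<close> in the component of either end of a crossing arc would give a diagonal
  \<open>E\<^sub>q\<^sub>q - E\<^sub>e\<^sub>e\<close> that separates the two root vectors in the double bracket with \<open>B\<^sub>0\<close>.\<close>

lemma card_comps_eq_2_if_no_cross:
  assumes no_cross: "\<And>p c. full_block p c \<Longrightarrow> same_comp p c" and arc: "(p, c) \<in> Pa" and pc: "\<not> same_comp p c"
  shows "card (weak_component Pb p) = 2 \<and> card (weak_component Pb c) = 2"
proof (rule ccontr)
  obtain p' where p': "same_comp p p'" "p' \<noteq> p" using exists_other_in_comp by blast
  obtain c' where c': "same_comp c c'" "c' \<noteq> c" using exists_other_in_comp by blast
  have ne: "c \<noteq> p" "c \<noteq> p'" "c' \<noteq> p" "c' \<noteq> p'"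
    using ne_if_not_same_comp[OF pc same_comp_refl same_comp_refl] ne_if_not_same_comp[OF pc p'(1) same_comp_refl]
      ne_if_not_same_comp[OF pc same_comp_refl c'(1)] ne_if_not_same_comp[OF pc p'(1) c'(1)] by auto
  have separated: "full_block p c" if "e \<noteq> p" "e \<noteq> p'" "e \<noteq> c" "e \<noteq> c'"
    and "same_comp q e" "same_comp q q'" "q' \<in> {p', c'}" for e q q'
  proof (rule full_block_if_separated[OF arc pc _ diagonal_Emat_diff p' c'])
    show "Emat q' q' - Emat e e \<in> L"
      using that same_comp_sym same_comp_trans by (blast intro: diag_diff_mem_if_same_comp)
    show "(Emat q' q' - Emat e e) $ p' $ p' - (Emat q' q' - Emat e e) $ c' $ c' \<noteq>
        (Emat q' q' - Emat e e) $ c $ c - (Emat q' q' - Emat e e) $ p $ p"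
      using that ne p'(2) c'(2) by (auto simp: Emat_nth)
  qed
  assume "\<not> (card (weak_component Pb p) = 2 \<and> card (weak_component Pb c) = 2)"
  then consider "card (weak_component Pb p) \<noteq> 2" | "card (weak_component Pb c) \<noteq> 2" by blast
  then show False
  proof cases
    case 1
    then obtain e where "same_comp p e" "e \<noteq> p" "e \<noteq> p'" using exists_third_in_comp[OF 1 p'(1)] by blast
    moreover have "e \<noteq> c" "e \<noteq> c'"
      using calculation ne_if_not_same_comp[OF pc _ same_comp_refl] ne_if_not_same_comp[OF pc _ c'(1)] by metis+
    ultimately have "full_block p c" using separated[of e p p'] p'(1) by blast
    then show False using no_cross pc by blast
  next
    case 2
    then obtain e where "same_comp c e" "e \<noteq> c" "e \<noteq> c'" using exists_third_in_comp[OF 2 c'(1)] by blast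
    moreover have "e \<noteq> p" "e \<noteq> p'"
      using calculation ne_if_not_same_comp[OF pc same_comp_refl] ne_if_not_same_comp[OF pc p'(1)] by metis+
    ultimately have "full_block p c" using separated[of e c c'] c'(1) by blast
    then show False using no_cross pc by blast
  qed
qed

lemma comp_weight_eq_if_no_cross:
  assumes no_cross: "\<And>p c. full_block p c \<Longrightarrow> same_comp p c" and H: "H \<in> L" "diagonal H"
    and arc: "(p, c) \<in> Pa" and pc: "\<not> same_comp p c"
  shows "comp_weight H p = comp_weight H c"
proof (rule ccontr)
  obtain p' where p': "same_comp p p'" "p' \<noteq> p" using exists_other_in_comp by blast
  obtain c' where c': "same_comp c c'" "c' \<noteq> c" using exists_other_in_comp by blast
  have "comp_weight H p = H $ p $ p + H $ p' $ p'" "comp_weight H c = H $ c $ c + H $ c' $ c'"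
    unfolding comp_weight_def
    using weak_component_eq_pair[OF _ p'] weak_component_eq_pair[OF _ c'] p'(2) c'(2)
      card_comps_eq_2_if_no_cross[OF no_cross arc pc] by simp_all
  moreover assume "comp_weight H p \<noteq> comp_weight H c"
  ultimately have "H $ p' $ p' - H $ c' $ c' \<noteq> H $ c $ c - H $ p $ p" by argo
  then have "full_block p c" by (rule full_block_if_separated[OF arc pc H p' c'])
  then show False using no_cross pc by blast
qed

lemma comp_weight_const_if_no_cross:
  assumes no_cross: "\<And>p c. full_block p c \<Longrightarrow> same_comp p c" and H: "H \<in> L" "diagonal H"
  shows "comp_weight H y = comp_weight H v"
  using union_rtrancl[of v y]
proof (induction rule: rtrancl_induct)
  case (step y z)
  show ?case
  proof (cases "same_comp y z")
    case True then show ?thesis using step.IH weak_component_eq[OF True] unfolding comp_weight_def by simp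
  next
    case False
    then have "(y, z) \<in> Pa" by (rule cross_arc_in_drift[OF step.hyps(2)])
    then show ?thesis using comp_weight_eq_if_no_cross[OF no_cross H _ False] step.IH by simp
  qed
qed simp

lemma card_comp_eq_2_if_no_cross:
  assumes no_cross: "\<And>p c. full_block p c \<Longrightarrow> same_comp p c" and "\<not> same_comp x y"
  shows "card (weak_component Pb x) = 2"
proof -
  obtain p c where "(p, c) \<in> Pa" "same_comp x p" "\<not> same_comp p c"
    using exists_cross_arc[OF union_rtrancl assms(2)] by blast
  then show ?thesis using card_comps_eq_2_if_no_cross[OF no_cross] weak_component_eq by metis
qed

text \<open>Without cross blocks all components would be pairs with equal weights under the anchor diagonal;
  but the component of the anchor node weighs at least 3 and any other at most 2.\<close>

lemma exists_cross_block:
  assumes "\<exists>x y. \<not> same_comp x y"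
  shows "\<exists>p c. \<not> same_comp p c \<and> full_block p c"
proof (rule ccontr)
  assume "\<nexists>p c. \<not> same_comp p c \<and> full_block p c"
  then have no_cross: "\<And>p c. full_block p c \<Longrightarrow> same_comp p c" by blast
  obtain H v where H: "H \<in> L" "diagonal H" "\<forall>a. 0 \<le> H $ a $ a" "H $ v $ v = 3" "\<forall>a. a \<noteq> v \<longrightarrow> H $ a $ a \<le> 1"
    using exists_anchor_diagonal by blast
  obtain x where x: "\<not> same_comp x v" and xv: "\<not> same_comp v x"
    using assms same_comp_sym same_comp_trans by blast
  obtain v' where v': "same_comp v v'" "v' \<noteq> v" using exists_other_in_comp by blast
  obtain x' where x': "same_comp x x'" "x' \<noteq> x" using exists_other_in_comp by blast
  have "comp_weight H v = H $ v $ v + H $ v' $ v'"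
    unfolding comp_weight_def
    using weak_component_eq_pair[OF card_comp_eq_2_if_no_cross[OF no_cross xv] v'] v'(2) by simp
  moreover have "comp_weight H x = H $ x $ x + H $ x' $ x'"
    unfolding comp_weight_def
    using weak_component_eq_pair[OF card_comp_eq_2_if_no_cross[OF no_cross x] x'] x'(2) by simp
  moreover have "x \<noteq> v" "x' \<noteq> v"
    using ne_if_not_same_comp[OF x same_comp_refl same_comp_refl] ne_if_not_same_comp[OF x x'(1) same_comp_refl] by auto
  ultimately have "comp_weight H x < comp_weight H v" using H(3-5) by (smt (verit))
  then show False using comp_weight_const_if_no_cross[OF no_cross H(1,2), of x v] by simp
qed

lemma L_eq_UNIV: "L = UNIV"
proof -
  have "Emat x y \<in> L" if "x \<noteq> y" for x y
  proof (cases "same_comp x y")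
    case True then show ?thesis using Emat_mem_if_same_comp that by blast
  next
    case False
    then obtain p c where "\<not> same_comp p c" "full_block p c" using exists_cross_block by blast
    then show ?thesis using Emat_mem_if_cross_block False by blast
  qed
  moreover obtain H v where H: "H \<in> L" "\<forall>a. 0 \<le> H $ a $ a" "H $ v $ v = 3"
    using exists_anchor_diagonal by blast
  moreover have "H $ v $ v \<le> trace H"
    unfolding trace_def by (rule member_le_sum) (use H(2) in auto)
  ultimately show ?thesis using lie_subalgebra_eq_UNIV[OF lie_subalgebra] by force
qed

end

lemma lie_rank_condition_if_generates:
  assumes gen: "\<And>L. lie_subalgebra L \<Longrightarrow> AA \<subseteq> L \<Longrightarrow> L = UNIV"
    and "Emat x y \<in> span AA" "x \<noteq> y" and "T \<in> span AA" "trace T \<noteq> 0"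
  shows "lie_rank_condition AA"
  unfolding lie_rank_condition_def
proof (intro allI impI, elim conjE)
  fix V assume V: "subspace V" "AA \<subseteq> V" "\<forall>X\<in>V. \<forall>A\<in>AA. commutator X A \<in> V"
  then have "span AA \<subseteq> V" by (simp add: span_minimal)
  then show "V = UNIV"
    using lie_ideal_eq_UNIV[OF ad_invariant_subspace_is_lie_ideal[OF gen V(1,3)]] assms(2-5) by blast
qed

lemma exists_nonloop_arc:
  assumes "\<forall>v. card (weak_component P v) \<ge> 2 \<and> strongly_connected_set P (weak_component P v)"
  shows "\<exists>a b. (a, b) \<in> P \<and> a \<noteq> b"
proof -
  fix v
  have "card (weak_component P v) \<ge> 2" using assms by blast
  then have "\<not> weak_component P v \<subseteq> {v}"
    using card_mono[of "{v}" "weak_component P v"] by auto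
  then obtain w where "w \<in> weak_component P v" "w \<noteq> v" by blast
  moreover have "v \<in> weak_component P v" unfolding weak_component_def by simp
  ultimately have "(v, w) \<in> (P \<inter> (weak_component P v \<times> weak_component P v))\<^sup>*"
    using assms unfolding strongly_connected_set_def by blast
  then have "(v, w) \<in> P\<^sup>*" using rtrancl_mono[of "P \<inter> _" P] by blast
  then show ?thesis using \<open>w \<noteq> v\<close>
    by (induction rule: rtrancl_induct) auto
qed

text \<open>The right-hand sides \<open>B\<^sub>0 + \<Sum> v\<^sub>i B\<^sub>i\<close> for the constant controls \<open>v = 0\<close> and
  \<open>v = e\<^sub>i\<close>, when the \<open>B\<^sub>i\<close> enumerate the basis matrices of the contraction pattern.\<close>

definition drift_control_set :: "('n \<times> 'n) set \<Rightarrow> ('n \<times> 'n) set \<Rightarrow> 'n \<Rightarrow> (real^'n::finite^'n) set" where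
  "drift_control_set Pa Pb v0 =
     insert (drift_witness Pa v0) ((\<lambda>p. drift_witness Pa v0 + (case p of (a, b) \<Rightarrow> Emat a b)) ` Pb)"

lemma drift_witness_in_span: "drift_witness Pa v0 \<in> span (drift_control_set Pa Pb v0)"
  unfolding drift_control_set_def by (rule span_base) simp

lemma Emat_in_span_drift_control_set:
  assumes "(a, b) \<in> Pb"
  shows "Emat a b \<in> span (drift_control_set Pa Pb v0)"
proof -
  have "drift_witness Pa v0 + Emat a b \<in> span (drift_control_set Pa Pb v0)"
    unfolding drift_control_set_def by (rule span_base) (use assms in force)
  from span_diff[OF this drift_witness_in_span] show ?thesis by simp
qed

lemma exists_nonzero_trace_in_span:
  assumes "(v0, v0) \<in> Pa \<union> Pb"
  shows "\<exists>T\<in>span (drift_control_set Pa Pb v0). trace T \<noteq> 0"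
proof -
  let ?B0 = "drift_witness Pa v0"
  have "0 \<le> trace ?B0"
    unfolding trace_def by (rule sum_nonneg) (simp add: drift_witness_nth)
  consider "(v0, v0) \<in> Pa" | "(v0, v0) \<in> Pb" using assms by blast
  then show ?thesis
  proof cases
    case 1
    have "?B0 $ v0 $ v0 \<le> trace ?B0"
      unfolding trace_def by (rule member_le_sum) (auto simp: drift_witness_nth)
    then show ?thesis using 1 by (intro bexI[OF _ drift_witness_in_span]) (simp add: drift_witness_nth)
  next
    case 2
    have "?B0 + Emat v0 v0 \<in> span (drift_control_set Pa Pb v0)"
      unfolding drift_control_set_def by (rule span_base) (use 2 in force)
    then show ?thesis using \<open>0 \<le> trace ?B0\<close> by (intro bexI) (auto simp: trace_add trace_Emat)
  qed
qed

lemma lie_rank_condition_drift_control_set: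
  fixes Pa Pb :: "('n::finite \<times> 'n) set"
  assumes components: "\<forall>v. card (weak_component Pb v) \<ge> 2 \<and> strongly_connected_set Pb (weak_component Pb v)"
    and union: "strongly_connected_set (Pa \<union> Pb) UNIV" and loop: "(v0, v0) \<in> Pa \<union> Pb"
  shows "lie_rank_condition (drift_control_set Pa Pb v0)"
proof -
  have gen: "L = UNIV" if L: "lie_subalgebra L" "drift_control_set Pa Pb v0 \<subseteq> L" for L
  proof -
    have "span (drift_control_set Pa Pb v0) \<subseteq> L" using L by (simp add: lie_subalgebra_def span_minimal)
    then have "pattern_subalgebra L Pa Pb v0"
      unfolding pattern_subalgebra_def
      using L(1) drift_witness_in_span Emat_in_span_drift_control_set assms by blast
    then show ?thesis by (rule pattern_subalgebra.L_eq_UNIV)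
  qed
  obtain a b where "(a, b) \<in> Pb" "a \<noteq> b" using exists_nonloop_arc[OF components] by blast
  moreover obtain T where "T \<in> span (drift_control_set Pa Pb v0)" "trace T \<noteq> 0"
    using exists_nonzero_trace_in_span[OF loop] by blast
  ultimately show ?thesis
    by (intro lie_rank_condition_if_generates[OF gen Emat_in_span_drift_control_set]) auto
qed

lemma drift_plus_list_realizable:
  fixes f :: "'a \<Rightarrow> 'b::real_vector"
  shows "insert B0 ((\<lambda>p. B0 + f p) ` set xs) \<subseteq> {B0 + (\<Sum>i\<in>{1..length xs}. v i *\<^sub>R f (xs ! (i - 1))) | v. True}"
proof -
  have "f (xs ! k) = (\<Sum>i\<in>{1..length xs}. (if i = Suc k then 1 else 0) *\<^sub>R f (xs ! (i - 1)))"
    if "k < length xs" for k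
  proof -
    have "(\<Sum>i\<in>{1..length xs}. (if i = Suc k then 1 else 0) *\<^sub>R f (xs ! (i - 1)))
        = (\<Sum>i\<in>{1..length xs}. if i = Suc k then f (xs ! k) else 0)"
      by (rule sum.cong) auto
    then show ?thesis using that by simp
  qed
  then show ?thesis
    by (fastforce simp: in_set_conv_nth intro: exI[of _ "\<lambda>_. 0"])
qed

lemma drift_arcs_Emat_image: "drift_arcs ((\<lambda>(i, j). Emat i j) ` P) = P"
  unfolding drift_arcs_def by (auto simp: Emat_nth split: if_splits) (force simp: Emat_nth)

lemma mem_Sigma_f:
  assumes "finite S" "g \<in> S"
  shows "g \<in> Sigma_f S"
proof -
  have "(\<Sum>h\<in>S. (if h = g then 1 else 0) *\<^sub>R h) = (\<Sum>h\<in>S. if h = g then g else 0)"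
    by (rule sum.cong) auto
  then show ?thesis
    unfolding Sigma_f_def using assms by (intro CollectI exI[of _ "\<lambda>h. if h = g then 1 else 0"]) simp
qed

lemma drift_witness_in_Sigma_r:
  "drift_witness Pa v0 \<in> Sigma_r ((\<lambda>(i, j). Emat i j) ` (Pa :: ('n::finite \<times> 'n) set))"
proof -
  let ?E = "\<lambda>(i, j). Emat i j :: real^'n^'n"
  define l where "l = (\<lambda>g. if g = Emat v0 v0 then 3 else (1::real))"
  have "inj_on ?E Pa" by (rule inj_onI) (auto simp: Emat_eq_iff)
  then have "(\<Sum>g\<in>?E ` Pa. l g *\<^sub>R g) = (\<Sum>p\<in>Pa. l (?E p) *\<^sub>R ?E p)"
    by (simp add: sum.reindex)
  also have "\<dots> = drift_witness Pa v0"
  proof -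
    have "(\<Sum>p\<in>Pa. l (?E p) * ?E p $ i $ j) = (\<Sum>p\<in>Pa. if p = (i, j) then l (Emat i j) else 0)" for i j
      by (rule sum.cong) (auto simp: Emat_nth split: if_splits)
    then have "(\<Sum>p\<in>Pa. l (?E p) *\<^sub>R ?E p) $ i $ j = (if (i, j) \<in> Pa then l (Emat i j) else 0)" for i j
      by simp
    moreover have "l (Emat i j) = (if i = v0 \<and> j = v0 then 3 else 1)" for i j
      unfolding l_def by (simp add: Emat_eq_iff)
    ultimately show ?thesis by (simp add: vec_eq_iff drift_witness_nth)
  qed
  finally show ?thesis
    unfolding Sigma_r_def by (intro CollectI exI[of _ l]) (simp add: l_def)
qed

theorem theorem3:
  fixes Palpha Pbeta :: "('n::finite \<times> 'n) set"
  assumes contr_comp: "\<forall>v. card (weak_component Pbeta v) \<ge> 2 \<and>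
                          strongly_connected_set Pbeta (weak_component Pbeta v)"
    and union_sc: "strongly_connected_set
                     (drift_arcs ((\<lambda>(i, j). Emat i j) ` Palpha) \<union> Pbeta) UNIV"
    and self_loop: "\<exists>v. (v, v) \<in> drift_arcs ((\<lambda>(i, j). Emat i j) ` Palpha) \<union> Pbeta"
  shows "structurally_accessible ((\<lambda>(i, j). Emat i j) ` Palpha) ((\<lambda>(i, j). Emat i j) ` Pbeta)"
proof -
  let ?E = "\<lambda>(i, j). Emat i j :: real^'n^'n"
  have arcs: "drift_arcs (?E ` Palpha) = Palpha" by (rule drift_arcs_Emat_image)
  from self_loop obtain v0 where "(v0, v0) \<in> drift_arcs (?E ` Palpha) \<union> Pbeta" by blast
  then have loop: "(v0, v0) \<in> Palpha \<union> Pbeta" unfolding arcs .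
  define B0 where "B0 = drift_witness Palpha v0"
  obtain xs where xs: "set xs = Pbeta" using finite_list[of Pbeta] by auto
  define B where "B = (\<lambda>i. ?E (xs ! (i - 1)))"
  define AA where "AA = drift_control_set Palpha Pbeta v0"
  have "AA \<subseteq> {B0 + (\<Sum>i\<in>{1..length xs}. v i *\<^sub>R B i) | v. True}"
    unfolding AA_def drift_control_set_def B0_def[symmetric] B_def xs[symmetric]
    by (rule drift_plus_list_realizable)
  moreover have "lie_rank_condition AA"
    using lie_rank_condition_drift_control_set[OF contr_comp _ loop] union_sc
    unfolding AA_def arcs by blast
  ultimately have "accessible B0 (length xs) B" by (rule accessible_if_lie_rank_condition)
  moreover have "length xs \<ge> 1"
    using exists_nonloop_arc[OF contr_comp] xs by (cases xs) auto
  moreover have "\<forall>i\<in>{1..length xs}. B i \<in> Sigma_f (?E ` Pbeta)"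
  proof
    fix i assume "i \<in> {1..length xs}"
    then have "xs ! (i - 1) \<in> Pbeta" using xs by auto
    then show "B i \<in> Sigma_f (?E ` Pbeta)" unfolding B_def by (intro mem_Sigma_f) auto
  qed
  moreover have "B0 \<in> Sigma_r (?E ` Palpha)" unfolding B0_def by (rule drift_witness_in_Sigma_r)
  ultimately show ?thesis unfolding structurally_accessible_def by blast
qed

end
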